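(* Let $d\ge2$, let $\{T(e)\}$ be i.i.d. on the edges of $\mathbb{Z}^d$ with values in $[0,\infty]$ and common law $\mathcal{L}$, assume $\mathcal{L}$ is useful, $\mathcal{L}([0,\infty))>p_c$, and that either (INF) $\mathcal{L}(\{\infty\})>0$, or (FU) $\mathcal{L}(\{\infty\})=0$ and the support of $\mathcal{L}$ is unbounded. Let $\mathfrak{P}_0=(\Lambda_0,u_0^\Lambda,v_0^\Lambda,\mathcal{A}_0^\Lambda)$ be a valid pattern. Then there exists a pattern $\mathfrak{P}=(\Lambda,u^\Lambda,v^\Lambda,\mathcal{A}^\Lambda)$ such that: (1) $\Lambda_0\subset\Lambda$; (2) $\mathbb{P}(\mathcal{A}^\Lambda)>0$; (3) on $\mathcal{A}^\Lambda$, every path from $u^\Lambda$ to $v^\Lambda$ that is optimal for the passage time among the paths entirely inside $\Lambda$ contains a subpath from $u_0^\Lambda$ to $v_0^\Lambda$ entirely inside $\Lambda_0$; (4) $\mathcal{A}^\Lambda\subset\mathcal{A}_0^\Lambda$; (5) in case (INF), $\mathfrak{P}$ satisfies: (AI-1) there is an integer $\ell\ge3$ with $\Lambda=B_\infty(0,\ell)$; (AI-2) $u^\Lambda=-\ell\epsilon_1$, $v^\Lambda=\ell\epsilon_1$; (AI-3) there exist a constant $T^\Lambda>0$ and a path $\pi_\infty$ from $u^\Lambda$ to $v^\Lambda$ inside $\Lambda$ such that $T(\pi_\infty)<T^\Lambda$ on $\mathcal{A}^\Lambda$; (AI-4) on $\mathcal{A}^\Lambda$, $\Lambda$ satisfies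 the boundary condition. In case (FU), $\mathfrak{P}$ satisfies: (AF-1) there is an integer $\ell>0$ with $\Lambda=B_\infty(0,\ell)$; (AF-2) $u^\Lambda=-\ell\epsilon_1$, $v^\Lambda=\ell\epsilon_1$; (AF-3) there is a constant $M^\Lambda$ such that on $\mathcal{A}^\Lambda$, every edge $e$ of $\Lambda$ that is not an edge of $\partial\Lambda$ has $T(e)\le M^\Lambda$; (AF-4) for every $M>0$, $\mathbb{P}(\mathcal{A}^\Lambda\cap\{\forall e\in\partial\Lambda,\ T(e)>M\})>0$.
   Context: An edge $e=\{u,v\}$ is said to belong to a vertex set if both $u,v$ do. For a vertex set $B$, $\partial B$ is the set of vertices of $B$ adjacent to a vertex outside $B$. $B_\infty(c,r)=\{u\in\mathbb{Z}^d:\|u-c\|_\infty\le r\}$; $\epsilon_1,\dots,\epsilon_d$ is the canonical basis. $p_c$ / $\overrightarrow{p_c}$: critical probabilities of Bernoulli / oriented Bernoulli bond percolation; $\mathcal{L}$ is useful if, with $t_{\min}$ the minimum of its support, $\mathcal{L}(\{t_{\min}\})<p_c$ when $t_{\min}=0$ and $<\overrightarrow{p_c}$ when $t_{\min}>0$. Passage time of a path is the sum of the passage times of its edges. A pattern $(\Lambda,u^\Lambda,v^\Lambda,\mathcal{A}^\Lambda)$ consists of a box $\Lambda$ (here $\Lambda_0=\prod_i\{0,\dots,L_i\}$ with integers $L_i\ge0$ not all zero, while $\Lambda$ may be a box $B_\infty(0,\ell)$ centered at $0$), two distinct vertices $u^\Lambda,v^\Lambda\in\partial\Lambda$, and an event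 $\mathcal{A}^\Lambda$ depending only on the passage times of edges of $\Lambda$. Valid pattern: $\mathbb{P}(\mathcal{A}^\Lambda)>0$; on $\mathcal{A}^\Lambda$ some path from $u^\Lambda$ to $v^\Lambda$ inside $\Lambda$ has finite passage time; and either $\mathcal{L}$ has unbounded support or there exist $\alpha\ne\alpha'$ in $\{\pm\epsilon_i\}$ with $u^\Lambda+\alpha\notin\Lambda$ and $v^\Lambda+\alpha'\notin\Lambda$. Boundary condition: for $s\in\mathbb{Z}^d$ and $\ell\ge3$, $\mathcal{S}_{s,\ell}$ is the set of edges of the straight path from $s-(\ell-1)\epsilon_1+(\ell-1)\epsilon_2$ to $s+(\ell-1)\epsilon_1+(\ell-1)\epsilon_2$ made of $2(\ell-1)$ steps in direction $\epsilon_1$. $B_\infty(s,\ell)$ satisfies the boundary condition if every edge $e$ belonging to $B_\infty(s,\ell)$ but not to $B_\infty(s,\ell-3)$ either belongs to $\mathcal{S}_{s,\ell}\cup(s+\mathbb{Z}\epsilon_1)$ and has $T(e)<\infty$, or has $T(e)=\infty$. *)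

theory Defs
  imports "HOL-Probability.Probability"
begin

definition Zd :: "nat \<Rightarrow> (nat \<Rightarrow> int) set" where
  "Zd d = {x. \<forall>i\<ge>d. x i = 0}"

definition uvec :: "nat \<Rightarrow> nat \<Rightarrow> int" where
  "uvec i = (\<lambda>j. if j = i then 1 else 0)"

definition vadd :: "(nat \<Rightarrow> int) \<Rightarrow> (nat \<Rightarrow> int) \<Rightarrow> nat \<Rightarrow> int" where
  "vadd x y = (\<lambda>k. x k + y k)"

definition vscale :: "int \<Rightarrow> (nat \<Rightarrow> int) \<Rightarrow> nat \<Rightarrow> int" where
  "vscale c x = (\<lambda>k. c * x k)"

definition adj :: "nat \<Rightarrow> (nat \<Rightarrow> int) \<Rightarrow> (nat \<Rightarrow> int) \<Rightarrow> bool" where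
  "adj d x y \<longleftrightarrow> x \<in> Zd d \<and> y \<in> Zd d \<and> (\<Sum>i<d. \<bar>x i - y i\<bar>) = 1"

definition edges :: "nat \<Rightarrow> (nat \<Rightarrow> int) set set" where
  "edges d = {{x, y} | x y. adj d x y}"

definition edges_of :: "nat \<Rightarrow> (nat \<Rightarrow> int) set \<Rightarrow> (nat \<Rightarrow> int) set set" where
  "edges_of d B = {e \<in> edges d. e \<subseteq> B}"

definition vboundary :: "nat \<Rightarrow> (nat \<Rightarrow> int) set \<Rightarrow> (nat \<Rightarrow> int) set" where
  "vboundary d B = {x \<in> B. \<exists>y. adj d x y \<and> y \<notin> B}"

definition ball_inf :: "nat \<Rightarrow> (nat \<Rightarrow> int) \<Rightarrow> int \<Rightarrow> (nat \<Rightarrow> int) set" where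
  "ball_inf d c r = {x \<in> Zd d. \<forall>i<d. \<bar>x i - c i\<bar> \<le> r}"

definition is_box :: "nat \<Rightarrow> (nat \<Rightarrow> int) set \<Rightarrow> bool" where
  "is_box d B \<longleftrightarrow> (\<exists>a b. (\<forall>i<d. a i \<le> b i) \<and>
      B = {x \<in> Zd d. \<forall>i<d. a i \<le> x i \<and> x i \<le> b i})"

definition box0 :: "nat \<Rightarrow> (nat \<Rightarrow> nat) \<Rightarrow> (nat \<Rightarrow> int) set" where
  "box0 d Ls = {x \<in> Zd d. \<forall>i<d. 0 \<le> x i \<and> x i \<le> int (Ls i)}"

definition is_path :: "nat \<Rightarrow> (nat \<Rightarrow> int) list \<Rightarrow> bool" where
  "is_path d \<pi> \<longleftrightarrow> \<pi> \<noteq> [] \<and> successively (adj d) \<pi>"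

definition path_from :: "nat \<Rightarrow> (nat \<Rightarrow> int) list \<Rightarrow> (nat \<Rightarrow> int) \<Rightarrow> (nat \<Rightarrow> int) \<Rightarrow> bool" where
  "path_from d \<pi> u v \<longleftrightarrow> is_path d \<pi> \<and> hd \<pi> = u \<and> last \<pi> = v"

definition passage :: "((nat \<Rightarrow> int) set \<Rightarrow> ennreal) \<Rightarrow> (nat \<Rightarrow> int) list \<Rightarrow> ennreal" where
  "passage \<omega> \<pi> = (\<Sum>i<length \<pi> - 1. \<omega> {\<pi> ! i, \<pi> ! Suc i})"

definition optimal_in :: "nat \<Rightarrow> ((nat \<Rightarrow> int) set \<Rightarrow> ennreal) \<Rightarrow> (nat \<Rightarrow> int) set
    \<Rightarrow> (nat \<Rightarrow> int) \<Rightarrow> (nat \<Rightarrow> int) \<Rightarrow> (nat \<Rightarrow> int) list \<Rightarrow> bool" where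
  "optimal_in d \<omega> B u v \<pi> \<longleftrightarrow> path_from d \<pi> u v \<and> set \<pi> \<subseteq> B \<and>
     (\<forall>\<pi>'. path_from d \<pi>' u v \<and> set \<pi>' \<subseteq> B \<longrightarrow> passage \<omega> \<pi> \<le> passage \<omega> \<pi>')"

definition has_subpath :: "nat \<Rightarrow> (nat \<Rightarrow> int) list \<Rightarrow> (nat \<Rightarrow> int) set
    \<Rightarrow> (nat \<Rightarrow> int) \<Rightarrow> (nat \<Rightarrow> int) \<Rightarrow> bool" where
  "has_subpath d \<pi> B u v \<longleftrightarrow>
     (\<exists>xs ys zs. \<pi> = xs @ ys @ zs \<and> path_from d ys u v \<and> set ys \<subseteq> B)"

definition FPP :: "nat \<Rightarrow> ennreal measure \<Rightarrow> ((nat \<Rightarrow> int) set \<Rightarrow> ennreal) measure" where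
  "FPP d L = PiM (edges d) (\<lambda>_. L)"

definition local_event :: "nat \<Rightarrow> ennreal measure \<Rightarrow> (nat \<Rightarrow> int) set
    \<Rightarrow> ((nat \<Rightarrow> int) set \<Rightarrow> ennreal) set \<Rightarrow> bool" where
  "local_event d L B A \<longleftrightarrow> A \<in> sets (FPP d L) \<and>
     (\<forall>\<omega>\<in>space (FPP d L). \<forall>\<omega>'\<in>space (FPP d L).
        (\<forall>e\<in>edges_of d B. \<omega> e = \<omega>' e) \<longrightarrow> (\<omega> \<in> A \<longleftrightarrow> \<omega>' \<in> A))"

definition Bern :: "nat \<Rightarrow> real \<Rightarrow> ((nat \<Rightarrow> int) set \<Rightarrow> bool) measure" where
  "Bern d p = PiM (edges d) (\<lambda>_. measure_pmf (bernoulli_pmf p))"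

definition cluster :: "nat \<Rightarrow> ((nat \<Rightarrow> int) set \<Rightarrow> bool) \<Rightarrow> (nat \<Rightarrow> int) set" where
  "cluster d \<omega> = {y. (\<lambda>x y. adj d x y \<and> \<omega> {x, y})\<^sup>*\<^sup>* (\<lambda>_. 0) y}"

definition ocluster :: "nat \<Rightarrow> ((nat \<Rightarrow> int) set \<Rightarrow> bool) \<Rightarrow> (nat \<Rightarrow> int) set" where
  "ocluster d \<omega> = {y. (\<lambda>x y. (\<exists>i<d. y = vadd x (uvec i)) \<and> x \<in> Zd d \<and> \<omega> {x, y})\<^sup>*\<^sup>* (\<lambda>_. 0) y}"

definition p_c :: "nat \<Rightarrow> real" where
  "p_c d = Sup {p \<in> {0..1}. measure (Bern d p) {\<omega> \<in> space (Bern d p). infinite (cluster d \<omega>)} = 0}"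

definition oriented_p_c :: "nat \<Rightarrow> real" where
  "oriented_p_c d = Sup {p \<in> {0..1}. measure (Bern d p) {\<omega> \<in> space (Bern d p). infinite (ocluster d \<omega>)} = 0}"

definition law_support :: "ennreal measure \<Rightarrow> ennreal set" where
  "law_support L = {x. \<forall>U. open U \<and> x \<in> U \<longrightarrow> emeasure L U > 0}"

definition t_min :: "ennreal measure \<Rightarrow> ennreal" where
  "t_min L = Inf (law_support L)"

definition useful :: "nat \<Rightarrow> ennreal measure \<Rightarrow> bool" where
  "useful d L \<longleftrightarrow> (t_min L = 0 \<longrightarrow> measure L {0} < p_c d) \<and>
                   (t_min L > 0 \<longrightarrow> measure L {t_min L} < oriented_p_c d)"

definition unbounded_support :: "ennreal measure \<Rightarrow> bool" where
  "unbounded_support L \<longleftrightarrow> (\<forall>M::real. \<exists>x\<in>law_support L. ennreal M < x \<and> x < \<infinity>)"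

definition pattern :: "nat \<Rightarrow> ennreal measure \<Rightarrow> (nat \<Rightarrow> int) set \<Rightarrow> (nat \<Rightarrow> int) \<Rightarrow> (nat \<Rightarrow> int)
    \<Rightarrow> ((nat \<Rightarrow> int) set \<Rightarrow> ennreal) set \<Rightarrow> bool" where
  "pattern d L B u v A \<longleftrightarrow> is_box d B \<and> u \<in> vboundary d B \<and> v \<in> vboundary d B \<and> u \<noteq> v
     \<and> local_event d L B A"

definition valid_pattern :: "nat \<Rightarrow> ennreal measure \<Rightarrow> (nat \<Rightarrow> int) set \<Rightarrow> (nat \<Rightarrow> int) \<Rightarrow> (nat \<Rightarrow> int)
    \<Rightarrow> ((nat \<Rightarrow> int) set \<Rightarrow> ennreal) set \<Rightarrow> bool" where
  "valid_pattern d L B u v A \<longleftrightarrow> pattern d L B u v A \<and>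
     measure (FPP d L) A > 0 \<and>
     (\<forall>\<omega>\<in>A. \<exists>\<pi>. path_from d \<pi> u v \<and> set \<pi> \<subseteq> B \<and> passage \<omega> \<pi> < \<infinity>) \<and>
     (unbounded_support L \<or>
      (\<exists>i<d. \<exists>j<d. \<exists>s\<in>{1,-1}. \<exists>t\<in>{1,-1}.
          vscale s (uvec i) \<noteq> vscale t (uvec j) \<and>
          vadd u (vscale s (uvec i)) \<notin> B \<and> vadd v (vscale t (uvec j)) \<notin> B))"

definition S_edges :: "(nat \<Rightarrow> int) \<Rightarrow> int \<Rightarrow> (nat \<Rightarrow> int) set set" where
  "S_edges s l = {{vadd s (vadd (vscale j (uvec 0)) (vscale (l - 1) (uvec 1))),
                   vadd s (vadd (vscale (j + 1) (uvec 0)) (vscale (l - 1) (uvec 1)))}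
                  | j. - (l - 1) \<le> j \<and> j \<le> l - 2}"

definition line1 :: "(nat \<Rightarrow> int) \<Rightarrow> (nat \<Rightarrow> int) set" where
  "line1 s = {vadd s (vscale k (uvec 0)) | k. True}"

definition boundary_condition :: "nat \<Rightarrow> ((nat \<Rightarrow> int) set \<Rightarrow> ennreal) \<Rightarrow> (nat \<Rightarrow> int) \<Rightarrow> int \<Rightarrow> bool" where
  "boundary_condition d \<omega> s l \<longleftrightarrow>
     (\<forall>e \<in> edges_of d (ball_inf d s l) - edges_of d (ball_inf d s (l - 3)).
        ((e \<in> S_edges s l \<or> e \<subseteq> line1 s) \<and> \<omega> e < \<infinity>) \<or> \<omega> e = \<infinity>)"

end

theory Submission
  imports Defs
begin

(* Put the box Q = Lambda_0 into the cube [-l, l]^d, step out of Q through u0 -> a' and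
   v0 -> b', and join -l e_1 to a' and b' to l e_1 by two corridors that are disjoint from
   each other and from Q and leave the inner cube [-(l-3), l-3]^d only along the first axis.
   The new event keeps A0, with a fixed path pi0 from u0 to v0 inside Q of passage time below n
   (countably many such pieces cover A0), makes corridor and gate edges cheap and every other
   edge of the cube outside Q expensive: infinite in case (INF), and in case (FU) above the
   cost TB of the path through the corridors and pi0. By independence of the weights this
   event still has positive probability. A geodesic from -l e_1 to l e_1 in the cube costs
   less than TB, so it only uses corridor, gate and Q edges; since the corridors meet Q only
   through the gates, it crosses Q from u0 to v0. *)

section \<open>Lattice paths and boxes\<close>

lemma Zd_fun_upd: "x \<in> Zd d \<Longrightarrow> k < d \<Longrightarrow> x(k := z) \<in> Zd d"
  by (auto simp: Zd_def)

lemma adj_sym: "adj d x y \<Longrightarrow> adj d y x"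
  unfolding adj_def by (auto simp: abs_minus_commute)

lemma adj_neq: "adj d x y \<Longrightarrow> x \<noteq> y"
  unfolding adj_def by auto

lemma adj_in_Zd: "adj d x y \<Longrightarrow> x \<in> Zd d \<and> y \<in> Zd d"
  unfolding adj_def by auto

lemma adj_in_edges: "adj d x y \<Longrightarrow> {x, y} \<in> edges d"
  unfolding edges_def by auto

lemma adj_unit_step:
  assumes "x \<in> Zd d" "k < d" "s = 1 \<or> s = -1"
  shows "adj d x (x(k := x k + s))"
proof -
  have "(\<Sum>i<d. \<bar>x i - (x(k := x k + s)) i\<bar>) = (\<Sum>i<d. if i = k then 1 else 0)"
    using assms(3) by (intro sum.cong) auto
  also have "\<dots> = 1" using assms(2) by simp
  finally show ?thesis using assms by (auto simp: adj_def Zd_fun_upd)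
qed

lemma adj_imp_unit_step:
  assumes "adj d x y"
  obtains k s where "k < d" "s = 1 \<or> s = -1" "y = x(k := x k + s)"
proof -
  have Z: "x \<in> Zd d" "y \<in> Zd d" and sum1: "(\<Sum>i<d. \<bar>x i - y i\<bar>) = 1"
    using assms by (auto simp: adj_def)
  obtain k where k: "k < d" "x k \<noteq> y k"
    using sum1 by (metis (mono_tags, lifting) lessThan_iff sum.neutral
        cancel_comm_monoid_add_class.diff_cancel abs_zero zero_neq_one)
  have split: "(\<Sum>i<d. \<bar>x i - y i\<bar>) = \<bar>x k - y k\<bar> + (\<Sum>i\<in>{..<d} - {k}. \<bar>x i - y i\<bar>)"
    using k by (subst sum.remove[of _ k]) auto
  have rest_nonneg: "(\<Sum>i\<in>{..<d} - {k}. \<bar>x i - y i\<bar>) \<ge> 0" by (intro sum_nonneg) auto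
  have step: "\<bar>x k - y k\<bar> = 1" and rest: "(\<Sum>i\<in>{..<d} - {k}. \<bar>x i - y i\<bar>) = 0"
    using sum1 split rest_nonneg k(2) by linarith+
  have "x i = y i" if "i \<noteq> k" for i
  proof (cases "i < d")
    case True
    with rest that show ?thesis by (subst (asm) sum_nonneg_eq_0_iff) auto
  qed (use Z in \<open>auto simp: Zd_def\<close>)
  then have "y = x(k := x k + (y k - x k))" by auto
  moreover have "y k - x k = 1 \<or> y k - x k = -1" using step by linarith
  ultimately show thesis using that k(1) by blast
qed

definition int_box :: "nat \<Rightarrow> (nat \<Rightarrow> int) \<Rightarrow> (nat \<Rightarrow> int) \<Rightarrow> (nat \<Rightarrow> int) set" where
  "int_box d lo hi = {x \<in> Zd d. \<forall>i<d. lo i \<le> x i \<and> x i \<le> hi i}"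

definition linked_in :: "nat \<Rightarrow> (nat \<Rightarrow> int) set \<Rightarrow> (nat \<Rightarrow> int) \<Rightarrow> (nat \<Rightarrow> int) \<Rightarrow> bool" where
  "linked_in d S = (\<lambda>x y. adj d x y \<and> x \<in> S \<and> y \<in> S)\<^sup>*\<^sup>*"

lemma int_boxI:
  "x \<in> Zd d \<Longrightarrow> (\<And>i. i < d \<Longrightarrow> lo i \<le> x i \<and> x i \<le> hi i) \<Longrightarrow> x \<in> int_box d lo hi"
  unfolding int_box_def by auto

lemma int_boxD: "x \<in> int_box d lo hi \<Longrightarrow> i < d \<Longrightarrow> lo i \<le> x i \<and> x i \<le> hi i"
  unfolding int_box_def by auto

lemma int_box_Zd: "x \<in> int_box d lo hi \<Longrightarrow> x \<in> Zd d"
  unfolding int_box_def by auto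

lemma int_box_mono:
  "(\<And>k. k < d \<Longrightarrow> lo' k \<le> lo k \<and> hi k \<le> hi' k) \<Longrightarrow> int_box d lo hi \<subseteq> int_box d lo' hi'"
  unfolding int_box_def by force

lemma finite_int_box: "finite (int_box d lo hi)"
proof -
  let ?ext = "\<lambda>f k. if k < d then f k else 0"
  have "int_box d lo hi \<subseteq> ?ext ` PiE {..<d} (\<lambda>k. {lo k..hi k})"
  proof
    fix x assume x: "x \<in> int_box d lo hi"
    then have "x = ?ext (restrict x {..<d})"
      by (auto simp: int_box_def Zd_def)
    moreover have "restrict x {..<d} \<in> PiE {..<d} (\<lambda>k. {lo k..hi k})"
      using x by (auto simp: int_box_def)
    ultimately show "x \<in> ?ext ` PiE {..<d} (\<lambda>k. {lo k..hi k})" by blast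
  qed
  then show ?thesis by (rule finite_subset) (intro finite_imageI finite_PiE; simp)
qed

lemma ball_inf_eq_int_box: "ball_inf d c r = int_box d (\<lambda>k. c k - r) (\<lambda>k. c k + r)"
  unfolding ball_inf_def int_box_def by auto

lemma box0_eq_int_box: "box0 d Ls = int_box d (\<lambda>_. 0) (\<lambda>k. if k < d then int (Ls k) else 0)"
  unfolding box0_def int_box_def by auto

lemma linked_in_refl: "linked_in d S x x"
  unfolding linked_in_def by simp

lemma linked_in_trans: "linked_in d S x y \<Longrightarrow> linked_in d S y z \<Longrightarrow> linked_in d S x z"
  unfolding linked_in_def by (rule rtranclp_trans)

lemma linked_in_adj: "adj d x y \<Longrightarrow> x \<in> S \<Longrightarrow> y \<in> S \<Longrightarrow> linked_in d S x y"
  unfolding linked_in_def by auto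

lemma linked_in_sym: "linked_in d S x y \<Longrightarrow> linked_in d S y x"
  unfolding linked_in_def
proof (induction rule: rtranclp_induct)
  case (step y z)
  then show ?case by (auto intro: converse_rtranclp_into_rtranclp adj_sym)
qed simp

lemma linked_in_mono: "linked_in d S x y \<Longrightarrow> S \<subseteq> T \<Longrightarrow> linked_in d T x y"
  unfolding linked_in_def
  by (induction rule: rtranclp_induct) (auto intro: rtranclp.rtrancl_into_rtrancl)

lemma linked_in_imp_path:
  assumes "linked_in d S x y" "x \<in> S"
  obtains \<pi> where "path_from d \<pi> x y" "set \<pi> \<subseteq> S"
proof -
  have "\<exists>\<pi>. path_from d \<pi> x y \<and> set \<pi> \<subseteq> S"
    using assms unfolding linked_in_def
  proof (induction rule: converse_rtranclp_induct)
    case base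
    then show ?case by (intro exI[of _ "[y]"]) (auto simp: path_from_def is_path_def)
  next
    case (step x z)
    then obtain \<pi> where "path_from d \<pi> z y" "set \<pi> \<subseteq> S" by auto
    with step(1) show ?case
      by (intro exI[of _ "x # \<pi>"]) (cases \<pi>, auto simp: path_from_def is_path_def)
  qed
  with that show thesis by blast
qed

lemma linked_in_segment_up:
  assumes "p \<in> Zd d" "k < d" "\<And>t. t \<le> n \<Longrightarrow> p(k := p k + int t) \<in> S"
  shows "linked_in d S p (p(k := p k + int n))"
  using assms(3)
proof (induction n)
  case 0
  then show ?case by (simp add: linked_in_refl)
next
  case (Suc n)
  have "adj d (p(k := p k + int n)) (p(k := p k + int (Suc n)))"
    using adj_unit_step[of "p(k := p k + int n)" d k 1] assms(1,2) Zd_fun_upd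
    by (auto simp: algebra_simps)
  with Suc show ?case by (meson le_SucI order_refl linked_in_adj linked_in_trans)
qed

lemma linked_in_segment:
  assumes "p \<in> Zd d" "k < d"
    and "\<And>z. min (p k) w \<le> z \<Longrightarrow> z \<le> max (p k) w \<Longrightarrow> p(k := z) \<in> S"
  shows "linked_in d S p (p(k := w))"
proof (cases "p k \<le> w")
  case True
  have "linked_in d S p (p(k := p k + int (nat (w - p k))))"
    by (rule linked_in_segment_up[OF assms(1,2)]) (use True in \<open>auto intro!: assms(3)\<close>)
  with True show ?thesis by simp
next
  case False
  let ?q = "p(k := w)"
  have "linked_in d S ?q (?q(k := ?q k + int (nat (p k - w))))"
    by (rule linked_in_segment_up) (use assms False Zd_fun_upd in \<open>auto intro!: assms(3)\<close>)
  moreover have "?q(k := ?q k + int (nat (p k - w))) = p" using False by auto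
  ultimately show ?thesis by (auto intro: linked_in_sym)
qed

lemma linked_in_int_box:
  assumes "x \<in> int_box d lo hi" "y \<in> int_box d lo hi"
  shows "linked_in d (int_box d lo hi) x y"
proof -
  \<comment> \<open>Replace the coordinates of \<open>x\<close> by those of \<open>y\<close> one at a time.\<close>
  define z where "z k = (\<lambda>i. if i < k then y i else x i)" for k
  have xZ: "x \<in> Zd d" and yZ: "y \<in> Zd d" using assms by (auto simp: int_box_def)
  have "linked_in d (int_box d lo hi) x (z k)" if "k \<le> d" for k
    using that
  proof (induction k)
    case 0
    then show ?case by (simp add: z_def linked_in_refl)
  next
    case (Suc k)
    have zZ: "z k \<in> Zd d" using xZ yZ by (auto simp: z_def Zd_def)
    have "linked_in d (int_box d lo hi) (z k) ((z k)(k := y k))"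
    proof (rule linked_in_segment[OF zZ])
      fix w assume "min (z k k) (y k) \<le> w" "w \<le> max (z k k) (y k)"
      then have "lo k \<le> w" "w \<le> hi k"
        using int_boxD[OF assms(1), of k] int_boxD[OF assms(2), of k] Suc.prems
        by (auto simp: z_def)
      then show "(z k)(k := w) \<in> int_box d lo hi"
        using assms zZ Suc.prems by (auto simp: int_box_def z_def Zd_def)
    qed (use Suc.prems in simp)
    moreover have "(z k)(k := y k) = z (Suc k)" by (auto simp: z_def)
    ultimately show ?case using Suc by (metis Suc_leD linked_in_trans)
  qed
  moreover have "z d = y" using xZ yZ by (auto simp: z_def Zd_def)
  ultimately show ?thesis by (metis order_refl)
qed

lemma linked_in_int_box_subset:
  "x \<in> B \<Longrightarrow> y \<in> B \<Longrightarrow> B = int_box d lo hi \<Longrightarrow> B \<subseteq> C \<Longrightarrow> linked_in d C x y"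
  using linked_in_int_box linked_in_mono by blast

lemma path_from_adj: "path_from d \<pi> x y \<Longrightarrow> Suc i < length \<pi> \<Longrightarrow> adj d (\<pi> ! i) (\<pi> ! Suc i)"
  unfolding path_from_def is_path_def using successively_nth by blast

lemma path_from_length: "path_from d \<pi> x y \<Longrightarrow> x \<noteq> y \<Longrightarrow> Suc 0 < length \<pi>"
  unfolding path_from_def is_path_def by (cases \<pi>) auto

lemma path_from_append3:
  assumes "path_from d p1 x1 y1" "path_from d p2 x2 y2" "path_from d p3 x3 y3"
    "adj d y1 x2" "adj d y2 x3"
  shows "path_from d (p1 @ p2 @ p3) x1 y3"
  using assms unfolding path_from_def is_path_def by (auto simp: successively_append_iff)

lemma is_path_infix: "path_from d (xs @ ys @ zs) x y \<Longrightarrow> ys \<noteq> [] \<Longrightarrow> is_path d ys"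
  unfolding path_from_def is_path_def by (auto simp: successively_append_iff)

lemma path_from_edges_of:
  "path_from d \<pi> x y \<Longrightarrow> set \<pi> \<subseteq> B \<Longrightarrow> Suc i < length \<pi> \<Longrightarrow> {\<pi> ! i, \<pi> ! Suc i} \<in> edges_of d B"
  using path_from_adj[of d \<pi> x y i] by (auto simp: edges_of_def edges_def dest: nth_mem)

lemma passage_singleton [simp]: "passage \<omega> [x] = 0"
  by (simp add: passage_def)

lemma passage_Cons_Cons: "passage \<omega> (x # y # zs) = \<omega> {x, y} + passage \<omega> (y # zs)"
  unfolding passage_def by (simp add: sum.lessThan_Suc_shift del: sum.lessThan_Suc)

lemma passage_append:
  "xs \<noteq> [] \<Longrightarrow> ys \<noteq> [] \<Longrightarrow> passage \<omega> (xs @ ys) = passage \<omega> xs + \<omega> {last xs, hd ys} + passage \<omega> ys"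
proof (induction xs rule: induct_list012)
  case (2 x)
  then show ?case by (cases ys) (auto simp: passage_Cons_Cons)
next
  case (3 x y zs)
  then show ?case by (simp add: passage_Cons_Cons add.assoc)
qed simp

lemma edge_le_passage: "Suc i < length \<pi> \<Longrightarrow> \<omega> {\<pi> ! i, \<pi> ! Suc i} \<le> passage \<omega> \<pi>"
  unfolding passage_def by (rule member_le_sum) auto

lemma passage_le_uniform:
  assumes "\<And>i. Suc i < length \<pi> \<Longrightarrow> \<omega> {\<pi> ! i, \<pi> ! Suc i} \<le> c"
  shows "passage \<omega> \<pi> \<le> of_nat (length \<pi> - 1) * c"
  unfolding passage_def
  using sum_bounded_above[of "{..<length \<pi> - 1}" "\<lambda>i. \<omega> {\<pi> ! i, \<pi> ! Suc i}" c] assms by auto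

lemma passage_cong:
  "(\<And>i. Suc i < length \<pi> \<Longrightarrow> \<omega> {\<pi> ! i, \<pi> ! Suc i} = \<omega>' {\<pi> ! i, \<pi> ! Suc i}) \<Longrightarrow>
   passage \<omega> \<pi> = passage \<omega>' \<pi>"
  unfolding passage_def by (intro sum.cong) auto

lemma walk_through_gates:
  assumes disj: "C1 \<inter> C2 = {}" "C1 \<inter> Q = {}" "C2 \<inter> Q = {}"
    and gates: "a \<in> Q" "a' \<in> C1" "b \<in> Q" "b' \<in> C2"
    and steps: "\<And>x y. R x y \<Longrightarrow> (x \<in> C1 \<and> y \<in> C1) \<or> (x \<in> C2 \<and> y \<in> C2) \<or> (x \<in> Q \<and> y \<in> Q)
                  \<or> {x, y} = {a, a'} \<or> {x, y} = {b, b'}"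
    and walk: "successively R \<pi>" "\<pi> \<noteq> []" "hd \<pi> \<in> C1" "last \<pi> \<in> C2"
  shows "\<exists>xs ys zs. \<pi> = xs @ ys @ zs \<and> ys \<noteq> [] \<and> hd ys = a \<and> last ys = b \<and> set ys \<subseteq> Q"
proof -
  define crosses where "crosses \<pi> \<longleftrightarrow>
    (\<exists>xs ys zs. \<pi> = xs @ ys @ zs \<and> ys \<noteq> [] \<and> hd ys = a \<and> last ys = b \<and> set ys \<subseteq> Q)" for \<pi>
  define leaves where "leaves \<pi> \<longleftrightarrow> (\<exists>ys zs. \<pi> = ys @ zs \<and> ys \<noteq> [] \<and> last ys = b \<and> set ys \<subseteq> Q)"
    for \<pi>
  have crosses_Cons: "crosses \<pi> \<Longrightarrow> crosses (x # \<pi>)" for x \<pi>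
    unfolding crosses_def by (metis append_Cons)
  have leaves_Cons: "leaves \<pi> \<Longrightarrow> x \<in> Q \<Longrightarrow> leaves (x # \<pi>)" for x \<pi>
    unfolding leaves_def by (metis append_Cons insert_subset last_ConsR list.distinct(1) list.set(2))
  have enter: "leaves (a # \<pi>) \<Longrightarrow> crosses (x # a # \<pi>)" for x \<pi>
    unfolding leaves_def crosses_def by (metis append_Cons append_Nil hd_append2 list.sel(1))
  have "(hd \<pi> \<in> C1 \<longrightarrow> crosses \<pi>) \<and> (hd \<pi> \<in> Q \<longrightarrow> crosses \<pi> \<or> leaves \<pi>)"
    if "successively R \<pi>" "\<pi> \<noteq> []" "last \<pi> \<in> C2" for \<pi>
    using that
  proof (induction \<pi> rule: induct_list012)
    case (2 x)
    then show ?case using disj by auto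
  next
    case (3 x y t)
    then have IH: "(y \<in> C1 \<longrightarrow> crosses (y # t)) \<and> (y \<in> Q \<longrightarrow> crosses (y # t) \<or> leaves (y # t))"
      and xy: "R x y" by auto
    have "crosses (x # y # t)" if "x \<in> C1"
    proof -
      have "y \<in> C1 \<or> y = a"
        using steps[OF xy] that disj gates unfolding doubleton_eq_iff by auto
      then show ?thesis using IH gates crosses_Cons enter by blast
    qed
    moreover have "crosses (x # y # t) \<or> leaves (x # y # t)" if "x \<in> Q"
    proof (cases "x = b")
      case True
      then have "leaves (x # y # t)" using that unfolding leaves_def
        by (intro exI[of _ "[x]"] exI[of _ "y # t"]) auto
      then show ?thesis ..
    next
      case False
      then have "y \<in> Q \<or> y \<in> C1"
        using steps[OF xy] that disj gates unfolding doubleton_eq_iff by auto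
      then show ?thesis using IH that crosses_Cons leaves_Cons by blast
    qed
    ultimately show ?case by simp
  qed simp
  then show ?thesis using walk unfolding crosses_def by blast
qed

section \<open>Exits of a box and the punctured shell\<close>

definition exit_coord :: "(nat \<Rightarrow> int) \<Rightarrow> nat \<Rightarrow> bool \<Rightarrow> int" where
  "exit_coord Li k t = (if t then Li k + 1 else -1)"

definition box_exit :: "nat \<Rightarrow> (nat \<Rightarrow> int) \<Rightarrow> (nat \<Rightarrow> int) \<Rightarrow> nat \<Rightarrow> bool \<Rightarrow> (nat \<Rightarrow> int) \<Rightarrow> bool" where
  "box_exit d Li a i s a' \<longleftrightarrow> a \<in> int_box d (\<lambda>_. 0) Li \<and> i < d \<and> a i = (if s then Li i else 0)
     \<and> a' = a(i := exit_coord Li i s)"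

lemma vboundary_box_exit:
  assumes "u \<in> vboundary d (int_box d (\<lambda>_. 0) Li)"
  obtains i s where "box_exit d Li u i s (u(i := exit_coord Li i s))"
proof -
  let ?Q = "int_box d (\<lambda>_. 0) Li"
  obtain y where uy: "u \<in> ?Q" "adj d u y" "y \<notin> ?Q" using assms by (auto simp: vboundary_def)
  obtain k s where ks: "k < d" "s = 1 \<or> s = -1" "y = u(k := u k + s)"
    using adj_imp_unit_step[OF uy(2)] by blast
  have "\<not> (0 \<le> y k \<and> y k \<le> Li k)"
  proof
    assume "0 \<le> y k \<and> y k \<le> Li k"
    then have "y \<in> ?Q" using ks int_boxD[OF uy(1)] adj_in_Zd[OF uy(2)]
      by (intro int_boxI) (auto split: if_splits)
    with uy show False by simp
  qed
  then have "(s = 1 \<and> u k = Li k) \<or> (s = -1 \<and> u k = 0)" using ks int_boxD[OF uy(1) ks(1)] by auto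
  then show thesis
  proof
    assume "s = 1 \<and> u k = Li k"
    then show thesis using that[of k True] uy(1) ks(1) by (auto simp: box_exit_def exit_coord_def)
  next
    assume "s = -1 \<and> u k = 0"
    then show thesis using that[of k False] uy(1) ks(1) by (auto simp: box_exit_def exit_coord_def)
  qed
qed

locale nonneg_box =
  fixes d :: nat and Li :: "nat \<Rightarrow> int"
  assumes Li_nonneg: "\<And>k. 0 \<le> Li k"
begin

abbreviation "Q \<equiv> int_box d (\<lambda>_. 0) Li"
abbreviation "Q1 \<equiv> int_box d (\<lambda>_. -1) (\<lambda>k. Li k + 1)"

lemma Q_subset_Q1: "Q \<subseteq> Q1"
  by (rule int_box_mono) auto

lemma exit_coord_outside: "exit_coord Li k t < 0 \<or> exit_coord Li k t > Li k"
  using Li_nonneg[of k] by (auto simp: exit_coord_def)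

lemma exit_coord_eq_iff: "exit_coord Li k t = exit_coord Li k t' \<longleftrightarrow> t = t'"
  using Li_nonneg[of k] by (auto simp: exit_coord_def)

lemma exit_coord_bounds: "-1 \<le> exit_coord Li k t" "exit_coord Li k t \<le> Li k + 1"
  using Li_nonneg[of k] by (auto simp: exit_coord_def)

lemma box_exitD:
  assumes "box_exit d Li a i s a'"
  shows "a \<in> Q" "i < d" "a' i = exit_coord Li i s" "\<And>k. k \<noteq> i \<Longrightarrow> a' k = a k"
    "a' \<in> Q1" "a' \<notin> Q" "adj d a a'"
proof -
  have a: "a \<in> Q" "i < d" "a i = (if s then Li i else 0)" "a' = a(i := exit_coord Li i s)"
    using assms by (auto simp: box_exit_def)
  then show "a \<in> Q" "i < d" "a' i = exit_coord Li i s" "\<And>k. k \<noteq> i \<Longrightarrow> a' k = a k" by auto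
  show "a' \<in> Q1"
  proof (rule int_boxI)
    show "a' \<in> Zd d" using a by (auto intro: Zd_fun_upd int_box_Zd)
    fix k assume "k < d"
    then show "-1 \<le> a' k \<and> a' k \<le> Li k + 1"
      using a int_boxD[OF a(1) \<open>k < d\<close>] exit_coord_bounds[of i s] by auto
  qed
  show "a' \<notin> Q" using int_boxD[of a' d "\<lambda>_. 0" Li i] a exit_coord_outside[of i s] by auto
  have "a' = a(i := a i + (if s then 1 else -1))" using a by (auto simp: exit_coord_def)
  then show "adj d a a'" using adj_unit_step[of a d i] a int_box_Zd by metis
qed

lemma box_exit_inj:
  assumes "box_exit d Li a i s a'" "box_exit d Li b j t b'" "a \<noteq> b"
  shows "a' \<noteq> b'"
proof
  assume eq: "a' = b'"
  note A = box_exitD[OF assms(1)] and B = box_exitD[OF assms(2)]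
  have "i = j"
  proof (rule ccontr)
    assume "i \<noteq> j"
    then have "b' i = b i" using B by auto
    then show False using eq A int_boxD[OF B(1) A(2)] exit_coord_outside[of i s] by auto
  qed
  then have "s = t" using eq A(3) B(3) exit_coord_eq_iff by metis
  have "a k = b k" for k
    using assms(1,2) A(4) B(4) eq \<open>i = j\<close> \<open>s = t\<close> by (cases "k = i") (auto simp: box_exit_def)
  with assms(3) show False by auto
qed

end

locale two_exits = nonneg_box +
  fixes a :: "nat \<Rightarrow> int" and i s a' b j \<sigma> b'
  assumes two_le_d: "2 \<le> d"
    and exit_a: "box_exit d Li a i s a'" and exit_b: "box_exit d Li b j \<sigma> b'" and a_neq_b: "a \<noteq> b"
begin

abbreviation "S \<equiv> Q1 - Q - {b'}"

lemmas a_exit = box_exitD[OF exit_a] and b_exit = box_exitD[OF exit_b]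

lemma a'_neq_b': "a' \<noteq> b'"
  by (rule box_exit_inj[OF exit_a exit_b a_neq_b])

lemma a'_in_S: "a' \<in> S"
  using a_exit a'_neq_b' by auto

lemma Q_bounds: "x \<in> Q \<Longrightarrow> k < d \<Longrightarrow> 0 \<le> x k \<and> x k \<le> Li k"
  using int_boxD by fastforce

lemma Q1_bounds: "x \<in> Q1 \<Longrightarrow> k < d \<Longrightarrow> -1 \<le> x k \<and> x k \<le> Li k + 1"
  using int_boxD by fastforce

text \<open>The coordinate \<open>k\<close>, outside the range of \<open>Q\<close>, keeps the whole sweep out of \<open>Q\<close>.\<close>

lemma shell_sweep:
  assumes p: "p \<in> Q1" and k: "k < d" "k \<noteq> m" "p k < 0 \<or> p k > Li k"
    and w: "m < d" "-1 \<le> w" "w \<le> Li m + 1"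
    and avoid: "\<And>z. min (p m) w \<le> z \<Longrightarrow> z \<le> max (p m) w \<Longrightarrow> p(m := z) \<noteq> b'"
  shows "linked_in d S p (p(m := w)) \<and> p(m := w) \<in> S"
proof -
  have pZ: "p \<in> Zd d" using p int_box_Zd by blast
  have inS: "p(m := z) \<in> S" if "min (p m) w \<le> z" "z \<le> max (p m) w" for z
  proof -
    have "-1 \<le> z" "z \<le> Li m + 1" using that w Q1_bounds[OF p w(1)] by auto
    then have "p(m := z) \<in> Q1" using p Q1_bounds[OF p] Zd_fun_upd[OF pZ w(1)]
      by (intro int_boxI) auto
    moreover have "p(m := z) \<notin> Q" using k Q_bounds[of "p(m := z)" k] by auto
    ultimately show ?thesis using avoid that by blast
  qed
  show ?thesis using linked_in_segment[OF pZ w(1) inS] inS[of w] by auto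
qed

lemma shell_sweep_apart:
  assumes "p \<in> Q1" "k < d" "k \<noteq> m" "p k < 0 \<or> p k > Li k"
    and "m < d" "-1 \<le> w" "w \<le> Li m + 1"
    and "k' \<noteq> m" "p k' \<noteq> b' k'"
  shows "linked_in d S p (p(m := w)) \<and> p(m := w) \<in> S"
  using assms by (intro shell_sweep) (auto simp: fun_eq_iff)

text \<open>The direction \<open>b k < a k\<close> points away from \<open>b k\<close>, so the sweep cannot meet \<open>b'\<close>.\<close>

lemma shell_sweep_away:
  assumes k: "k < d" "k \<noteq> i" "k \<noteq> j"
  shows "linked_in d S a' (a'(k := exit_coord Li k (b k < a k))) \<and>
    a'(k := exit_coord Li k (b k < a k)) \<in> S"
proof (rule shell_sweep[of _ i])
  show "a' \<in> Q1" "i < d" "a' i < 0 \<or> a' i > Li i" using a_exit exit_coord_outside by auto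
  fix z assume z: "min (a' k) (exit_coord Li k (b k < a k)) \<le> z"
    "z \<le> max (a' k) (exit_coord Li k (b k < a k))"
  show "a'(k := z) \<noteq> b'"
  proof
    assume eq: "a'(k := z) = b'"
    then have "b k = z" using b_exit(4) k by (metis fun_upd_same)
    moreover have "a' k = a k" using a_exit(4) k by auto
    ultimately have "z = a k"
      using z Q_bounds[OF a_exit(1) k(1)] by (auto simp: exit_coord_def min_def max_def split: if_splits)
    with eq \<open>a' k = a k\<close> a'_neq_b' show False by auto
  qed
qed (use k exit_coord_bounds in auto)

lemma Q1_fun_upd: "x \<in> Q1 \<Longrightarrow> k < d \<Longrightarrow> -1 \<le> z \<Longrightarrow> z \<le> Li k + 1 \<Longrightarrow> x(k := z) \<in> Q1"
  using Q1_bounds by (intro int_boxI) (auto intro: Zd_fun_upd int_box_Zd)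

lemma Q1_fun_upd_exit: "x \<in> Q1 \<Longrightarrow> k < d \<Longrightarrow> x(k := exit_coord Li k t) \<in> Q1"
  using Q1_fun_upd exit_coord_bounds by blast

lemma a'_outside: "a' i < 0 \<or> a' i > Li i"
  using a_exit exit_coord_outside by auto

lemma b'_inside: "k < d \<Longrightarrow> k \<noteq> j \<Longrightarrow> 0 \<le> b' k \<and> b' k \<le> Li k"
  using b_exit Q_bounds by auto

lemma shell_turn_around:
  assumes m: "i = m" and \<tau>: "s \<noteq> \<tau>" and face: "(m, \<tau>) \<noteq> (j, \<sigma>)"
  shows "\<exists>w. linked_in d S a' w \<and> w \<in> S \<and> w m = exit_coord Li m \<tau>"
proof -
  let ?e = "exit_coord Li"
  have "m < d" using a_exit(2) m by simp
  \<comment> \<open>First leave the face of \<open>b'\<close> along a coordinate \<open>k \<noteq> m\<close>, then sweep coordinate \<open>m\<close> across.\<close>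
  obtain k p where k: "k < d" "k \<noteq> m" and p: "linked_in d S a' p" "p \<in> Q1" "p k = ?e k (p k > Li k)"
    "p k \<noteq> b' k"
  proof (cases "j = m")
    case False
    let ?p = "a'(j := ?e j (\<not> \<sigma>))"
    have "linked_in d S a' ?p \<and> ?p \<in> S"
    proof (rule shell_sweep_apart[of a' i j _ i])
      show "a' i \<noteq> b' i" using a'_outside b'_inside[OF a_exit(2)] False m by auto
    qed (use False m a_exit(2,5) b_exit(2) a'_outside exit_coord_bounds in simp_all)
    moreover have "?p j \<noteq> b' j" using b_exit(3) exit_coord_eq_iff[of j "\<not> \<sigma>" \<sigma>] by simp
    ultimately show thesis
      using that[of j ?p] False b_exit(2) Li_nonneg[of j] by (auto simp: exit_coord_def)
  next
    case True
    define k where "k = (if m = 0 then 1 else (0::nat))"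
    have k: "k < d" "k \<noteq> m" using two_le_d by (auto simp: k_def)
    let ?p = "a'(k := ?e k (b k < a k))"
    have "linked_in d S a' ?p \<and> ?p \<in> S" using shell_sweep_away k True m by auto
    moreover have "?p k \<noteq> b' k" using b'_inside[of k] exit_coord_outside[of k "b k < a k"] k True by auto
    ultimately show thesis
      using that[of k ?p] k Li_nonneg[of k] by (auto simp: exit_coord_def)
  qed
  have "linked_in d S p (p(m := ?e m \<tau>)) \<and> p(m := ?e m \<tau>) \<in> S"
  proof (rule shell_sweep_apart[of p k m _ k])
    show "p k < 0 \<or> p k > Li k" using p(3) exit_coord_outside by metis
  qed (use k \<open>m < d\<close> p exit_coord_bounds in simp_all)
  with p(1) show ?thesis by (auto intro: linked_in_trans)
qed

lemma shell_detour:
  assumes m: "m < d" "i \<noteq> m" and same: "\<forall>k. k \<noteq> m \<longrightarrow> a' k = b' k"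
  shows "\<exists>w. linked_in d S a' w \<and> w \<in> S \<and> w m = exit_coord Li m \<tau>"
proof -
  let ?e = "exit_coord Li"
  \<comment> \<open>\<open>a'\<close> and \<open>b'\<close> lie on the same face; go around \<open>b'\<close> through the opposite face
    \<open>x\<^sub>i = ?e i (\<not> s)\<close>.\<close>
  have "j = i" using same m a'_outside b'_inside[OF a_exit(2)] by fastforce
  have "\<sigma> = s" using same m a_exit(3) b_exit(3) \<open>j = i\<close> exit_coord_eq_iff by metis
  let ?p1 = "a'(m := ?e m (b m < a m))"
  let ?p2 = "?p1(i := ?e i (\<not> s))"
  have "linked_in d S a' ?p1 \<and> ?p1 \<in> S"
    using shell_sweep_away m \<open>j = i\<close> by auto
  moreover have "linked_in d S ?p1 ?p2 \<and> ?p2 \<in> S"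
  proof (rule shell_sweep_apart[of ?p1 m i _ m])
    show "?p1 m \<noteq> b' m"
      using b'_inside[of m] exit_coord_outside[of m "b m < a m"] m \<open>j = i\<close> by auto
    show "?p1 m < 0 \<or> ?p1 m > Li m" using exit_coord_outside[of m "b m < a m"] by simp
  qed (use m a_exit(2) Q1_fun_upd_exit[OF a_exit(5) m(1)] exit_coord_bounds in simp_all)
  moreover have "linked_in d S ?p2 (?p2(m := ?e m \<tau>)) \<and> ?p2(m := ?e m \<tau>) \<in> S"
  proof (rule shell_sweep_apart[of ?p2 i m _ i])
    show "?p2 i \<noteq> b' i"
      using b_exit(3) \<open>j = i\<close> \<open>\<sigma> = s\<close> exit_coord_eq_iff[of i "\<not> s" s] by simp
    show "?p2 i < 0 \<or> ?p2 i > Li i" using exit_coord_outside[of i "\<not> s"] by simp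
    show "?p2 \<in> Q1" by (intro Q1_fun_upd_exit a_exit(2,5) m)
  qed (use m a_exit(2) exit_coord_bounds in simp_all)
  ultimately have "linked_in d S a' (?p2(m := ?e m \<tau>))" "?p2(m := ?e m \<tau>) \<in> S"
    by (blast intro: linked_in_trans)+
  then show ?thesis by (intro exI[of _ "?p2(m := ?e m \<tau>)"]) simp
qed

lemma shell_reaches_face:
  assumes m: "m < d" and face: "(m, \<tau>) \<noteq> (j, \<sigma>)"
  obtains w where "linked_in d S a' w" "w \<in> S" "w m = exit_coord Li m \<tau>"
proof -
  consider "i = m" "s = \<tau>" | "i = m" "s \<noteq> \<tau>" | "i \<noteq> m" "\<exists>k. k \<noteq> m \<and> a' k \<noteq> b' k"
    | "i \<noteq> m" "\<forall>k. k \<noteq> m \<longrightarrow> a' k = b' k"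
    by blast
  then have "\<exists>w. linked_in d S a' w \<and> w \<in> S \<and> w m = exit_coord Li m \<tau>"
  proof cases
    case 1
    then show ?thesis using a'_in_S a_exit linked_in_refl by blast
  next
    case 2
    then show ?thesis using shell_turn_around face by blast
  next
    case 3
    then obtain k where "k \<noteq> m" "a' k \<noteq> b' k" by blast
    then have "linked_in d S a' (a'(m := exit_coord Li m \<tau>)) \<and> a'(m := exit_coord Li m \<tau>) \<in> S"
      by (intro shell_sweep_apart[of a' i m _ k]) (use 3 m a_exit(2,5) a'_outside exit_coord_bounds in simp_all)
    then show ?thesis by auto
  next
    case 4
    then show ?thesis using shell_detour m by blast
  qed
  with that show thesis by blast
qed

end

section \<open>Two disjoint corridors\<close>

definition axis_pt :: "int \<Rightarrow> nat \<Rightarrow> int" where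
  "axis_pt t = (\<lambda>k. if k = 0 then t else 0)"

lemma vscale_uvec0_eq_axis_pt: "vscale t (uvec 0) = axis_pt t"
  by (auto simp: vscale_def uvec_def axis_pt_def)

lemma axis_pt_Zd: "0 < d \<Longrightarrow> axis_pt t \<in> Zd d"
  by (auto simp: axis_pt_def Zd_def)

lemma axis_pt_in_line1: "axis_pt t \<in> line1 (\<lambda>_. 0)"
  unfolding line1_def axis_pt_def vadd_def vscale_def uvec_def by (auto intro!: exI[of _ t])

lemma axis_pt_in_int_box:
  "0 < d \<Longrightarrow> lo 0 \<le> t \<Longrightarrow> t \<le> hi 0 \<Longrightarrow> (\<And>k. 0 < k \<Longrightarrow> lo k \<le> 0 \<and> 0 \<le> hi k)
   \<Longrightarrow> axis_pt t \<in> int_box d lo hi"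
  by (intro int_boxI axis_pt_Zd) (auto simp: axis_pt_def)

lemma int_box_on_axis:
  assumes "x \<in> int_box d lo hi" "\<And>k. 0 < k \<Longrightarrow> lo k = 0 \<and> hi k = 0"
  shows "x = axis_pt (x 0)"
proof
  fix k show "x k = axis_pt (x 0) k"
    using assms int_boxD[OF assms(1), of k] int_box_Zd[OF assms(1)]
    by (cases "k < d") (auto simp: axis_pt_def Zd_def)
qed

lemma not_in_vboundary_cube:
  assumes "x \<in> Zd d" "\<And>k. k < d \<Longrightarrow> \<bar>x k\<bar> < r"
  shows "x \<notin> vboundary d (int_box d (\<lambda>_. -r) (\<lambda>_. r))"
proof
  assume "x \<in> vboundary d (int_box d (\<lambda>_. -r) (\<lambda>_. r))"
  then obtain y where y: "adj d x y" "y \<notin> int_box d (\<lambda>_. -r) (\<lambda>_. r)"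
    by (auto simp: vboundary_def)
  obtain k s where "k < d" "s = 1 \<or> s = -1" "y = x(k := x k + s)"
    using adj_imp_unit_step[OF y(1)] by blast
  have "y \<in> int_box d (\<lambda>_. -r) (\<lambda>_. r)"
  proof (rule int_boxI)
    show "y \<in> Zd d" using adj_in_Zd[OF y(1)] by simp
    fix i assume "i < d"
    with assms(2)[of i] \<open>y = x(k := x k + s)\<close> \<open>s = 1 \<or> s = -1\<close> \<open>k < d\<close> assms(2)[of k]
    show "-r \<le> y i \<and> y i \<le> r" by (cases "i = k") auto
  qed
  with y show False by simp
qed

lemma axis_pt_in_vboundary_cube:
  assumes "0 < d" "0 \<le> r" "\<bar>t\<bar> = r"
  shows "axis_pt t \<in> vboundary d (int_box d (\<lambda>_. -r) (\<lambda>_. r))"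
proof -
  let ?y = "(axis_pt t)(0 := axis_pt t 0 + (if t \<ge> 0 then 1 else -1))"
  have "adj d (axis_pt t) ?y" by (rule adj_unit_step[OF axis_pt_Zd[OF assms(1)] assms(1)]) auto
  moreover have "?y \<notin> int_box d (\<lambda>_. -r) (\<lambda>_. r)"
    using int_boxD[of ?y d "\<lambda>_. -r" "\<lambda>_. r" 0] assms by (auto simp: axis_pt_def)
  moreover have "axis_pt t \<in> int_box d (\<lambda>_. -r) (\<lambda>_. r)"
    using assms by (intro axis_pt_in_int_box) auto
  ultimately show ?thesis by (auto simp: vboundary_def)
qed

definition beyond_coord :: "(nat \<Rightarrow> int) \<Rightarrow> nat \<Rightarrow> bool \<Rightarrow> int" where
  "beyond_coord Li k t = (if t then Li k + 2 else -2)"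

lemma beyond_coord_eq: "beyond_coord Li k t = exit_coord Li k t + (if t then 1 else -1)"
  by (auto simp: beyond_coord_def exit_coord_def)

text \<open>Coordinate \<open>0\<close> is the first axis \<open>e\<^sub>1\<close>. \<open>C1\<close> runs from \<open>-l e\<^sub>1\<close> along a tail, a block on
  the left, a slab beyond the face \<open>(m, \<not> side)\<close> of \<open>Q1\<close> and the punctured shell to \<open>a'\<close>; \<open>C2\<close>
  runs from \<open>b'\<close> through the face \<open>(m, side)\<close>, a slab, a block on the right and a tail to \<open>l e\<^sub>1\<close>.
  Normally \<open>(m, side)\<close> is the face of \<open>b'\<close>; if \<open>b'\<close> faces the left tail, \<open>C2\<close> first climbs a
  detour column to the face \<open>x\<^sub>1 = Li 1 + 1\<close>.\<close>

locale corridors = two_exits +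
  fixes N K R l :: int
  assumes Li_le_N: "\<And>k. Li k \<le> N" and K_eq: "K = N + 3" and R_eq: "R = K + 3" and l_eq: "l = R + 3"
begin

definition "reroute \<longleftrightarrow> j = 0 \<and> \<not> \<sigma>"
definition "m = (if reroute then 1 else j)"
definition "side = (if reroute then True else \<sigma>)"

definition "slab1 = int_box d (\<lambda>k. if k = m then (if side then -R else Li m + 2) else -R)
  (\<lambda>k. if k = m then (if side then -2 else R) else if k = 0 then K - 1 else R)"
definition "slab2 = int_box d (\<lambda>k. if k = m then (if side then Li m + 2 else -R) else if k = 0 then -K + 1 else -R)
  (\<lambda>k. if k = m then (if side then R else -2) else R)"
definition "block1 = int_box d (\<lambda>_. -R) (\<lambda>k. if k = 0 then -K else R)"
definition "block2 = int_box d (\<lambda>k. if k = 0 then K else -R) (\<lambda>_. R)"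
definition "tail1 = int_box d (\<lambda>k. if k = 0 then -l else 0) (\<lambda>k. if k = 0 then -R else 0)"
definition "tail2 = int_box d (\<lambda>k. if k = 0 then R else 0) (\<lambda>k. if k = 0 then l else 0)"
definition "detour = (if reroute then int_box d (\<lambda>k. if k = 0 then -2 else b k)
  (\<lambda>k. if k = 0 then -2 else if k = 1 then Li 1 + 1 else b k) else {})"

definition "C1 = S \<union> slab1 \<union> block1 \<union> tail1"
definition "C2 = {b'} \<union> detour \<union> slab2 \<union> block2 \<union> tail2"

abbreviation "BR \<equiv> int_box d (\<lambda>_. -R) (\<lambda>_. R)"
abbreviation "Bl \<equiv> int_box d (\<lambda>_. -l) (\<lambda>_. l)"

lemma zero_lt_d: "0 < d" and one_lt_d: "1 < d"
  using two_le_d by auto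

lemma N_nonneg: "0 \<le> N"
  using Li_nonneg[of 0] Li_le_N[of 0] by simp

lemma m_lt_d: "m < d"
  using b_exit(2) one_lt_d by (auto simp: m_def)

lemma m_eq_0_imp_side: "m = 0 \<Longrightarrow> side"
  by (auto simp: m_def side_def reroute_def split: if_splits)

lemma Q1_bounds_0: "x \<in> Q1 \<Longrightarrow> -1 \<le> x 0 \<and> x 0 \<le> N + 1"
  using Q1_bounds[OF _ zero_lt_d, of x] Li_le_N[of 0] by auto

lemma slab1_coord_m: "x \<in> slab1 \<Longrightarrow> if side then x m \<le> -2 else Li m + 2 \<le> x m"
  unfolding slab1_def by (drule int_boxD[OF _ m_lt_d]) auto

lemma slab2_coord_m: "x \<in> slab2 \<Longrightarrow> if side then Li m + 2 \<le> x m else x m \<le> -2"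
  unfolding slab2_def by (drule int_boxD[OF _ m_lt_d]) auto

lemma slab1_coord_0: "x \<in> slab1 \<Longrightarrow> x 0 \<le> K - 1"
  unfolding slab1_def
  by (drule int_boxD[OF _ zero_lt_d]) (use m_eq_0_imp_side N_nonneg K_eq in \<open>cases "m = 0"; auto\<close>)

lemma slab2_coord_0: "x \<in> slab2 \<Longrightarrow> -K + 1 \<le> x 0"
  unfolding slab2_def
  by (drule int_boxD[OF _ zero_lt_d]) (use m_eq_0_imp_side Li_nonneg[of 0] N_nonneg K_eq in \<open>cases "m = 0"; auto\<close>)

lemma detour_coords: "x \<in> detour \<Longrightarrow> reroute \<and> x 0 = -2 \<and> b 1 \<le> x 1"
  unfolding detour_def
  by (cases reroute) (auto dest: int_boxD[OF _ zero_lt_d] int_boxD[OF _ one_lt_d])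

lemma coord_0_left: "x \<in> block1 \<union> tail1 \<Longrightarrow> x 0 \<le> -K"
  unfolding block1_def tail1_def using R_eq by (auto dest: int_boxD[OF _ zero_lt_d])

lemma coord_0_right: "x \<in> block2 \<union> tail2 \<Longrightarrow> K \<le> x 0"
  unfolding block2_def tail2_def using R_eq by (auto dest: int_boxD[OF _ zero_lt_d])

lemma far_from_Q1: "x \<in> slab1 \<union> slab2 \<union> block1 \<union> block2 \<union> tail1 \<union> tail2 \<union> detour \<Longrightarrow> x \<notin> Q1"
proof
  assume x: "x \<in> slab1 \<union> slab2 \<union> block1 \<union> block2 \<union> tail1 \<union> tail2 \<union> detour" and "x \<in> Q1"
  then have x0: "-1 \<le> x 0 \<and> x 0 \<le> N + 1" and xm: "-1 \<le> x m \<and> x m \<le> Li m + 1"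
    using Q1_bounds_0 Q1_bounds m_lt_d by auto
  from x show False
  proof (elim UnE)
    assume "x \<in> slab1" from slab1_coord_m[OF this] xm show False by (auto split: if_splits)
  next
    assume "x \<in> slab2" from slab2_coord_m[OF this] xm show False by (auto split: if_splits)
  next
    assume "x \<in> detour" from detour_coords[OF this] x0 show False by auto
  qed (use x0 coord_0_left[of x] coord_0_right[of x] K_eq N_nonneg in auto)+
qed

lemma C1_Q1: "x \<in> C1 \<Longrightarrow> x \<in> S \<or> x \<notin> Q1"
  using far_from_Q1 unfolding C1_def by blast

lemma C2_Q1: "x \<in> C2 \<Longrightarrow> x = b' \<or> x \<notin> Q1"
  using far_from_Q1 unfolding C2_def by blast

lemma C1_C2_disjoint: "C1 \<inter> C2 = {}"
proof -
  have "x \<notin> slab2 \<union> detour" if "x \<in> slab1" for x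
    using that slab1_coord_m[of x] slab2_coord_m[of x] detour_coords[of x] int_boxD[OF b_exit(1) one_lt_d]
      Li_nonneg[of m] m_def side_def by (auto split: if_splits)
  moreover have "x \<notin> block2 \<union> tail2" if "x \<in> slab1 \<union> block1 \<union> tail1" for x
    using that slab1_coord_0 coord_0_left coord_0_right[of x] K_eq N_nonneg by fastforce
  moreover have "x \<notin> slab2 \<union> detour" if "x \<in> block1 \<union> tail1" for x
    using that coord_0_left[of x] slab2_coord_0[of x] detour_coords[of x] K_eq N_nonneg by auto
  moreover have "b' \<in> Q1" by (rule b_exit(5))
  ultimately show ?thesis
    using far_from_Q1 unfolding C1_def C2_def by blast
qed

lemma C1_Q_disjoint: "C1 \<inter> Q = {}"
  using C1_Q1 Q_subset_Q1 by blast

lemma C2_Q_disjoint: "C2 \<inter> Q = {}"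
  using C2_Q1 Q_subset_Q1 b_exit(6) by blast

lemma beyond_coord_bounds: "-R \<le> beyond_coord Li k t" "beyond_coord Li k t \<le> R"
  using Li_nonneg[of k] Li_le_N[of k] K_eq R_eq by (auto simp: beyond_coord_def)

lemma axis_pts_in_blocks:
  "axis_pt (-R) \<in> block1" "axis_pt (-R) \<in> tail1" "axis_pt (-l) \<in> tail1"
  "axis_pt R \<in> block2" "axis_pt R \<in> tail2" "axis_pt l \<in> tail2"
  unfolding block1_def tail1_def block2_def tail2_def
  using zero_lt_d N_nonneg K_eq R_eq l_eq by (auto intro!: axis_pt_in_int_box)

lemma linked_C1: "linked_in d C1 a' (axis_pt (-l))"
proof -
  have "(m, \<not> side) \<noteq> (j, \<sigma>)" by (auto simp: m_def side_def reroute_def)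
  then obtain w where w: "linked_in d S a' w" "w \<in> S" "w m = exit_coord Li m (\<not> side)"
    using shell_reaches_face[OF m_lt_d] by metis
  define w' where "w' = w(m := beyond_coord Li m (\<not> side))"
  have wZ: "w \<in> Zd d" using w(2) int_box_Zd by blast
  have "adj d w w'"
    using adj_unit_step[OF wZ m_lt_d, of "if \<not> side then 1 else -1"] w(3)
    by (simp add: w'_def beyond_coord_eq)
  moreover have w'_slab1: "w' \<in> slab1" unfolding slab1_def
  proof (rule int_boxI)
    show "w' \<in> Zd d" unfolding w'_def by (rule Zd_fun_upd[OF wZ m_lt_d])
    fix k assume "k < d"
    then show "(if k = m then if side then -R else Li m + 2 else -R) \<le> w' k \<and>
          w' k \<le> (if k = m then if side then -2 else R else if k = 0 then K - 1 else R)"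
      using Q1_bounds[of w k] w(2) Li_nonneg[of k] Li_le_N[of k] Li_le_N[of m] K_eq R_eq
      by (auto simp: w'_def beyond_coord_def)
  qed
  moreover define q where "q = (\<lambda>k. if k = 0 then -K else if k = m then beyond_coord Li m (\<not> side) else 0)"
  have qZ: "q \<in> Zd d" using zero_lt_d m_lt_d by (auto simp: q_def Zd_def)
  have "q \<in> slab1" unfolding slab1_def
  proof (rule int_boxI[OF qZ])
    fix k assume "k < d"
    show "(if k = m then if side then -R else Li m + 2 else -R) \<le> q k \<and>
          q k \<le> (if k = m then if side then -2 else R else if k = 0 then K - 1 else R)"
      using m_eq_0_imp_side Li_le_N[of m] N_nonneg K_eq R_eq
      by (cases "k = m"; cases "m = 0") (auto simp: q_def beyond_coord_def)
  qed
  moreover have "q \<in> block1" unfolding block1_def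
    using beyond_coord_bounds[of m "\<not> side"] K_eq R_eq N_nonneg by (intro int_boxI[OF qZ]) (auto simp: q_def)
  ultimately have "linked_in d C1 w w'" "linked_in d C1 w' q"
    "linked_in d C1 q (axis_pt (-R))" "linked_in d C1 (axis_pt (-R)) (axis_pt (-l))"
    using w(2) axis_pts_in_blocks
    by (auto simp: C1_def intro: linked_in_adj linked_in_int_box_subset[OF _ _ slab1_def]
        linked_in_int_box_subset[OF _ _ block1_def] linked_in_int_box_subset[OF _ _ tail1_def])
  moreover have "linked_in d C1 a' w" using w(1) by (rule linked_in_mono) (auto simp: C1_def)
  ultimately show ?thesis by (meson linked_in_trans)
qed

lemma linked_C2_slab2: obtains e where "e \<in> slab2" "linked_in d C2 b' e"
proof (cases reroute)
  case False
  then have m: "m = j" and side: "side = \<sigma>" by (auto simp: m_def side_def)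
  define e where "e = b'(j := beyond_coord Li j \<sigma>)"
  have bZ: "b' \<in> Zd d" using b_exit(5) int_box_Zd by blast
  have "adj d b' e"
    using adj_unit_step[OF bZ b_exit(2), of "if \<sigma> then 1 else -1"] b_exit(3)
    by (simp add: e_def beyond_coord_eq)
  moreover have "e \<in> slab2" unfolding slab2_def
  proof (rule int_boxI)
    show "e \<in> Zd d" unfolding e_def by (rule Zd_fun_upd[OF bZ b_exit(2)])
    fix k assume k: "k < d"
    show "(if k = m then if side then Li m + 2 else -R else if k = 0 then -K + 1 else -R) \<le> e k \<and>
          e k \<le> (if k = m then if side then R else -2 else R)"
      using m side Li_le_N[of j] Q_bounds[OF b_exit(1) k] Li_le_N[of k] b_exit(4)[of k] K_eq R_eq
      by (cases "k = j") (auto simp: e_def beyond_coord_def)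
  qed
  ultimately show thesis using that by (auto simp: C2_def intro: linked_in_adj)
next
  case True
  then have m: "m = 1" and side by (simp_all add: m_def side_def)
  from True have j0: "j = 0" and "\<not> \<sigma>" by (simp_all add: reroute_def)
  have bZ: "b \<in> Zd d" using b_exit(1) int_box_Zd by blast
  have b': "b' = b(0 := -1)" using exit_b j0 \<open>\<not> \<sigma>\<close> by (simp add: box_exit_def exit_coord_def)
  define c0 where "c0 = b(0 := -2)"
  define c1 where "c1 = c0(1 := Li 1 + 1)"
  define c2 where "c2 = c1(1 := Li 1 + 2)"
  have c0Z: "c0 \<in> Zd d" and c1Z: "c1 \<in> Zd d" and c2Z: "c2 \<in> Zd d"
    unfolding c0_def c1_def c2_def using bZ zero_lt_d one_lt_d by (auto intro!: Zd_fun_upd)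
  have "adj d b' c0"
    using adj_unit_step[OF _ zero_lt_d, of b' "-1"] b' bZ zero_lt_d
    by (simp add: c0_def Zd_fun_upd)
  moreover have "adj d c1 c2"
    using adj_unit_step[OF c1Z one_lt_d, of 1] by (simp add: c1_def c2_def ac_simps)
  moreover have "c0 \<in> detour" "c1 \<in> detour"
    using True Q_bounds[OF b_exit(1) one_lt_d] c0Z c1Z
    by (auto simp: detour_def c0_def c1_def intro!: int_boxI)
  moreover have "c2 \<in> slab2" unfolding slab2_def
  proof (rule int_boxI[OF c2Z])
    fix k assume k: "k < d"
    show "(if k = m then if side then Li m + 2 else -R else if k = 0 then -K + 1 else -R) \<le> c2 k \<and>
          c2 k \<le> (if k = m then if side then R else -2 else R)"
      using m \<open>side\<close> Q_bounds[OF b_exit(1) k] Li_le_N[of 1] Li_le_N[of k] K_eq R_eq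
      by (auto simp: c0_def c1_def c2_def)
  qed
  moreover have "detour = int_box d (\<lambda>k. if k = 0 then -2 else b k)
    (\<lambda>k. if k = 0 then -2 else if k = 1 then Li 1 + 1 else b k)"
    using True by (simp add: detour_def)
  ultimately have "linked_in d C2 b' c0" "linked_in d C2 c0 c1" "linked_in d C2 c1 c2"
    by (auto simp: C2_def intro: linked_in_adj linked_in_int_box_subset)
  then have "linked_in d C2 b' c2" by (meson linked_in_trans)
  with \<open>c2 \<in> slab2\<close> show thesis by (rule that)
qed

lemma linked_C2: "linked_in d C2 b' (axis_pt l)"
proof -
  obtain e where e: "e \<in> slab2" "linked_in d C2 b' e" by (rule linked_C2_slab2)
  define q where "q = (\<lambda>k. if k = 0 then K else if k = m then beyond_coord Li m side else 0)"
  have qZ: "q \<in> Zd d" using zero_lt_d m_lt_d by (auto simp: q_def Zd_def)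
  have "q \<in> slab2" unfolding slab2_def
  proof (rule int_boxI[OF qZ])
    fix k assume "k < d"
    show "(if k = m then if side then Li m + 2 else -R else if k = 0 then -K + 1 else -R) \<le> q k \<and>
          q k \<le> (if k = m then if side then R else -2 else R)"
      using m_eq_0_imp_side Li_le_N[of m] Li_nonneg[of m] N_nonneg K_eq R_eq
      by (cases "k = m"; cases "m = 0") (auto simp: q_def beyond_coord_def)
  qed
  moreover have "q \<in> block2" unfolding block2_def
    using beyond_coord_bounds[of m side] K_eq R_eq N_nonneg by (intro int_boxI[OF qZ]) (auto simp: q_def)
  ultimately have "linked_in d C2 e q" "linked_in d C2 q (axis_pt R)" "linked_in d C2 (axis_pt R) (axis_pt l)"
    using e axis_pts_in_blocks
    by (auto simp: C2_def intro: linked_in_int_box_subset[OF _ _ slab2_def]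
        linked_in_int_box_subset[OF _ _ block2_def] linked_in_int_box_subset[OF _ _ tail2_def])
  with e(2) show ?thesis by (meson linked_in_trans)
qed

lemma R_nonneg: "0 \<le> R" and R_lt_l: "R < l" and l_pos: "0 < l" and three_le_l: "3 \<le> l"
  using N_nonneg K_eq R_eq l_eq by auto

lemma Q1_subset_BR: "Q1 \<subseteq> BR"
proof (rule int_box_mono)
  fix k show "-R \<le> -1 \<and> Li k + 1 \<le> R" using Li_le_N[of k] N_nonneg K_eq R_eq by simp
qed

lemma BR_subset_Bl: "BR \<subseteq> Bl"
  using R_lt_l N_nonneg K_eq R_eq by (intro int_box_mono) auto

lemma C1_subset: "C1 \<subseteq> BR \<union> tail1" and C2_subset: "C2 \<subseteq> BR \<union> tail2"
proof -
  have "slab1 \<subseteq> BR" "slab2 \<subseteq> BR" "block1 \<subseteq> BR" "block2 \<subseteq> BR"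
    unfolding slab1_def slab2_def block1_def block2_def
    using Li_le_N Li_nonneg[of m] N_nonneg K_eq R_eq by (auto intro!: int_box_mono)
  moreover have "detour \<subseteq> BR"
  proof (cases reroute)
    case True
    have "int_box d (\<lambda>k. if k = 0 then -2 else b k)
      (\<lambda>k. if k = 0 then -2 else if k = 1 then Li 1 + 1 else b k) \<subseteq> BR"
    proof (rule int_box_mono)
      fix k assume "k < d"
      then show "-R \<le> (if k = 0 then -2 else b k) \<and>
          (if k = 0 then -2 else if k = 1 then Li 1 + 1 else b k) \<le> R"
        using Q_bounds[OF b_exit(1) \<open>k < d\<close>] Li_le_N[of k] Li_le_N[of 1] N_nonneg K_eq R_eq by auto
    qed
    with True show ?thesis by (simp add: detour_def)
  qed (simp add: detour_def)
  ultimately show "C1 \<subseteq> BR \<union> tail1" "C2 \<subseteq> BR \<union> tail2"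
    unfolding C1_def C2_def using Q1_subset_BR b_exit(5) by blast+
qed

lemma tails_subset_Bl: "tail1 \<subseteq> Bl" "tail2 \<subseteq> Bl"
  unfolding tail1_def tail2_def using R_lt_l N_nonneg K_eq R_eq by (auto intro!: int_box_mono)

lemma subset_Bl: "C1 \<subseteq> Bl" "C2 \<subseteq> Bl" "Q \<subseteq> Bl" "Q1 \<subseteq> Bl"
  using C1_subset C2_subset Q_subset_Q1 Q1_subset_BR BR_subset_Bl tails_subset_Bl by blast+

lemma axis_pt_in_BR_iff: "axis_pt t \<in> BR \<longleftrightarrow> \<bar>t\<bar> \<le> R"
proof
  assume "axis_pt t \<in> BR"
  then show "\<bar>t\<bar> \<le> R" using int_boxD[OF _ zero_lt_d] by (force simp: axis_pt_def)
next
  assume "\<bar>t\<bar> \<le> R"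
  then show "axis_pt t \<in> BR" using zero_lt_d R_nonneg by (intro axis_pt_in_int_box) auto
qed

lemma tail1_on_axis: "x \<in> tail1 \<Longrightarrow> \<exists>t. x = axis_pt t \<and> -l \<le> t \<and> t \<le> -R"
  unfolding tail1_def using int_box_on_axis int_boxD[OF _ zero_lt_d] by fastforce

lemma tail2_on_axis: "x \<in> tail2 \<Longrightarrow> \<exists>t. x = axis_pt t \<and> R \<le> t \<and> t \<le> l"
  unfolding tail2_def using int_box_on_axis int_boxD[OF _ zero_lt_d] by fastforce

lemma C1_outside_BR:
  assumes "x \<in> C1" "x \<notin> BR"
  obtains t where "x = axis_pt t" "-l \<le> t" "t < -R"
proof -
  have "x \<in> tail1" using assms C1_subset by blast
  then obtain t where t: "x = axis_pt t" "-l \<le> t" "t \<le> -R" using tail1_on_axis by blast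
  have "t \<noteq> -R" using t(1) assms(2) axis_pt_in_BR_iff[of "-R"] R_nonneg by auto
  with t that show thesis by auto
qed

lemma C2_outside_BR:
  assumes "x \<in> C2" "x \<notin> BR"
  obtains t where "x = axis_pt t" "R < t" "t \<le> l"
proof -
  have "x \<in> tail2" using assms C2_subset by blast
  then obtain t where t: "x = axis_pt t" "R \<le> t" "t \<le> l" using tail2_on_axis by blast
  have "t \<noteq> R" using t(1) assms(2) axis_pt_in_BR_iff[of R] R_nonneg by auto
  with t that show thesis by auto
qed

text \<open>This yields the boundary condition, as \<open>R = l - 3\<close>.\<close>

lemma corridor_edge_on_axis:
  assumes C: "C = C1 \<or> C = C2" and xy: "x \<in> C" "y \<in> C" "adj d x y" and out: "\<not> (x \<in> BR \<and> y \<in> BR)"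
  shows "{x, y} \<subseteq> line1 (\<lambda>_. 0)"
proof -
  have on_axis: "\<exists>t. p = axis_pt t \<and> R < \<bar>t\<bar>" if "p \<in> C" "p \<notin> BR" for p
  proof (cases "C = C1")
    case True
    with that obtain t where "p = axis_pt t" "t < -R" by (metis C1_outside_BR)
    with R_nonneg show ?thesis by auto
  next
    case False
    with C that obtain t where "p = axis_pt t" "R < t" by (metis C2_outside_BR)
    with R_nonneg show ?thesis by auto
  qed
  have key: "q \<in> line1 (\<lambda>_. 0)" if pq: "p \<in> C" "p \<notin> BR" "q \<in> C" "adj d p q" for p q
  proof (cases "q \<in> BR")
    case True
    obtain t where t: "p = axis_pt t" "R < \<bar>t\<bar>" using on_axis pq by blast
    obtain k s where ks: "k < d" "q = p(k := p k + s)" using adj_imp_unit_step[OF pq(4)] by metis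
    have "k = 0"
    proof (rule ccontr)
      assume "k \<noteq> 0"
      then have "q 0 = t" using ks t by (simp add: axis_pt_def)
      then show False using int_boxD[OF True zero_lt_d] t(2) by auto
    qed
    then have "q = axis_pt (t + s)" using ks t by (auto simp: axis_pt_def)
    then show ?thesis using axis_pt_in_line1 by simp
  next
    case False
    then show ?thesis using on_axis pq(3) axis_pt_in_line1 by blast
  qed
  have own: "p \<in> line1 (\<lambda>_. 0)" if "p \<in> C" "p \<notin> BR" for p
    using on_axis[OF that] axis_pt_in_line1 by blast
  show ?thesis
  proof (cases "x \<in> BR")
    case True
    then have "y \<notin> BR" using out by simp
    with xy show ?thesis using key[OF xy(2) _ xy(1) adj_sym[OF xy(3)]] own by blast
  next
    case False
    with xy show ?thesis using key[OF xy(1) _ xy(2,3)] own by blast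
  qed
qed

lemma BR_vboundary_disjoint:
  assumes "x \<in> BR" shows "x \<notin> vboundary d Bl"
proof (rule not_in_vboundary_cube)
  show "x \<in> Zd d" using assms by (rule int_box_Zd)
  fix k assume "k < d"
  with int_boxD[OF assms this] R_lt_l show "\<bar>x k\<bar> < l" by auto
qed

lemma corridor_vboundary:
  "x \<in> C1 \<Longrightarrow> x \<in> vboundary d Bl \<Longrightarrow> x = axis_pt (-l)"
  "x \<in> C2 \<Longrightarrow> x \<in> vboundary d Bl \<Longrightarrow> x = axis_pt l"
proof -
  have interior: "axis_pt t \<notin> vboundary d Bl" if "\<bar>t\<bar> < l" for t
  proof (rule not_in_vboundary_cube)
    show "axis_pt t \<in> Zd d" using zero_lt_d by (rule axis_pt_Zd)
    show "\<bar>axis_pt t k\<bar> < l" for k using that l_pos by (simp add: axis_pt_def)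
  qed
  show "x = axis_pt (-l)" if "x \<in> C1" "x \<in> vboundary d Bl"
  proof -
    have "x \<notin> BR" using that BR_vboundary_disjoint by blast
    with that(1) obtain t where t: "x = axis_pt t" "-l \<le> t" "t < -R" by (rule C1_outside_BR)
    then have "\<not> \<bar>t\<bar> < l" using interior that(2) by blast
    with t(2,3) R_nonneg have "t = -l" by arith
    with t(1) show ?thesis by simp
  qed
  show "x = axis_pt l" if "x \<in> C2" "x \<in> vboundary d Bl"
  proof -
    have "x \<notin> BR" using that BR_vboundary_disjoint by blast
    with that(1) obtain t where t: "x = axis_pt t" "R < t" "t \<le> l" by (rule C2_outside_BR)
    then have "\<not> \<bar>t\<bar> < l" using interior that(2) by blast
    with t(2,3) R_nonneg have "t = l" by arith
    with t(1) show ?thesis by simp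
  qed
qed

lemma axis_pts_in_corridors: "axis_pt (-l) \<in> C1" "axis_pt l \<in> C2"
  using axis_pts_in_blocks by (auto simp: C1_def C2_def)

lemma a'_in_C1: "a' \<in> C1" and b'_in_C2: "b' \<in> C2"
  using a'_in_S by (simp_all add: C1_def C2_def)

definition "path1 = (SOME \<pi>. path_from d \<pi> (axis_pt (-l)) a' \<and> set \<pi> \<subseteq> C1)"
definition "path2 = (SOME \<pi>. path_from d \<pi> b' (axis_pt l) \<and> set \<pi> \<subseteq> C2)"

lemma path1: "path_from d path1 (axis_pt (-l)) a'" "set path1 \<subseteq> C1"
proof -
  obtain \<pi> where "path_from d \<pi> (axis_pt (-l)) a'" "set \<pi> \<subseteq> C1"
    using linked_in_imp_path[OF linked_in_sym[OF linked_C1] axis_pts_in_corridors(1)] by blast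
  then have "\<exists>\<pi>. path_from d \<pi> (axis_pt (-l)) a' \<and> set \<pi> \<subseteq> C1" by blast
  from someI_ex[OF this] show "path_from d path1 (axis_pt (-l)) a'" "set path1 \<subseteq> C1"
    unfolding path1_def by blast+
qed

lemma path2: "path_from d path2 b' (axis_pt l)" "set path2 \<subseteq> C2"
proof -
  have "b' \<in> C2" by (simp add: C2_def)
  then obtain \<pi> where "path_from d \<pi> b' (axis_pt l)" "set \<pi> \<subseteq> C2"
    using linked_in_imp_path[OF linked_C2] by blast
  then have "\<exists>\<pi>. path_from d \<pi> b' (axis_pt l) \<and> set \<pi> \<subseteq> C2" by blast
  from someI_ex[OF this] show "path_from d path2 b' (axis_pt l)" "set path2 \<subseteq> C2"
    unfolding path2_def by blast+
qed

end

section \<open>Independent edge weights\<close>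

lemma (in prob_space) positive_piece_of_cover:
  assumes A: "A \<in> sets M" "measure M A > 0" and J: "countable J" and G: "G ` J \<subseteq> sets M"
    and N: "N \<in> null_sets M" and cover: "A \<subseteq> (\<Union>j\<in>J. G j) \<union> N"
  shows "\<exists>j\<in>J. measure M (A \<inter> G j) > 0"
proof (rule ccontr)
  assume "\<not> ?thesis"
  then have "measure M (A \<inter> G j) = 0" if "j \<in> J" for j
    using that measure_nonneg[of M "A \<inter> G j"] by (meson linorder_not_less order.antisym)
  then have "A \<inter> G j \<in> null_sets M" if "j \<in> J" for j
    using that A G by (auto simp: emeasure_eq_measure intro!: null_setsI)
  then have "(\<Union>j\<in>J. A \<inter> G j) \<union> N \<in> null_sets M" using J N by (intro null_sets.Un null_sets_UN') auto
  moreover have "A \<subseteq> (\<Union>j\<in>J. A \<inter> G j) \<union> N" using cover by blast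
  ultimately have "A \<in> null_sets M" using null_sets_subset A(1) by blast
  with A show False by (simp add: emeasure_eq_measure null_sets_def)
qed

lemma ennreal_finite_set_bounded:
  fixes f :: "'a \<Rightarrow> ennreal"
  assumes "finite E" "\<forall>e\<in>E. f e < \<infinity>"
  shows "\<exists>n::nat. \<forall>e\<in>E. f e \<le> of_nat n"
  using assms
proof (induction E rule: finite_induct)
  case (insert x E)
  then obtain n where n: "\<forall>e\<in>E. f e \<le> of_nat n" by auto
  obtain k :: nat where k: "f x < of_nat k" using insert.prems ennreal_Ex_less_of_nat by auto
  have "of_nat n \<le> (of_nat (max n k) :: ennreal)" "of_nat k \<le> (of_nat (max n k) :: ennreal)"
    by (simp_all add: of_nat_mono)
  with n k have "\<forall>e\<in>insert x E. f e \<le> of_nat (max n k)" by (auto intro: order_trans less_imp_le)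
  then show ?case by blast
qed simp

locale edge_weights =
  fixes d :: nat and L :: "ennreal measure"
  assumes prob_space_L: "prob_space L" and sets_L: "sets L = sets borel"
begin

abbreviation "P \<equiv> FPP d L"

sublocale product_prob_space "\<lambda>_. L" "edges d"
  unfolding product_prob_space_def product_prob_space_axioms_def product_sigma_finite_def
  using prob_space_L prob_space_imp_sigma_finite by auto

lemma space_L: "space L = UNIV"
  using sets_eq_imp_space_eq[OF sets_L] by simp

lemma space_FPP: "space P = PiE (edges d) (\<lambda>_. UNIV)"
  by (simp add: FPP_def space_PiM space_L)

lemma prob_space_FPP: "prob_space P"
  unfolding FPP_def by (rule P.prob_space_axioms)

lemma measurable_edge_weight: "e \<in> edges d \<Longrightarrow> (\<lambda>\<omega>. \<omega> e) \<in> borel_measurable P"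
  using measurable_component_singleton[of e "edges d" "\<lambda>_. L"] measurable_cong_sets[OF refl sets_L]
  unfolding FPP_def by blast

lemma measure_edge_weight:
  assumes "e \<in> edges d" "S \<in> sets borel"
  shows "measure P {\<omega>\<in>space P. \<omega> e \<in> S} = measure L S"
  using emeasure_PiM_Collect_single[of e S] assms sets_L by (simp add: FPP_def measure_def)

lemma measurable_passage:
  "(\<And>k. Suc k < length \<pi> \<Longrightarrow> {\<pi> ! k, \<pi> ! Suc k} \<in> edges d) \<Longrightarrow> (\<lambda>\<omega>. passage \<omega> \<pi>) \<in> borel_measurable P"
  unfolding passage_def by (rule borel_measurable_sum) (auto intro!: measurable_edge_weight)

lemma cylinder_in_sets:
  assumes "F \<subseteq> edges d" "finite F" "\<And>e. e \<in> F \<Longrightarrow> S e \<in> sets borel"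
  shows "{\<omega>\<in>space P. \<forall>e\<in>F. \<omega> e \<in> S e} \<in> sets P"
proof -
  have "{\<omega>\<in>space P. \<forall>e\<in>F. \<omega> e \<in> S e} = prod_emb (edges d) (\<lambda>_. L) F (PiE F S)"
    unfolding prod_emb_def FPP_def using assms by (auto simp: space_PiM Pi_iff)
  also have "\<dots> \<in> sets P" unfolding FPP_def using assms sets_L by (intro sets_PiM_I) auto
  finally show ?thesis .
qed

lemma indep_edge_weights:
  assumes "edges d \<noteq> {}"
  shows "prob_space.indep_vars P (\<lambda>_. L) (\<lambda>e \<omega>. \<omega> e) (edges d)"
proof -
  interpret FPP: prob_space P by (rule prob_space_FPP)
  have rv: "(\<lambda>\<omega>. \<omega> e) \<in> measurable P L" for e
  proof (cases "e \<in> edges d")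
    case True
    then show ?thesis unfolding FPP_def by (rule measurable_component_singleton)
  next
    case False
    then have "\<And>\<omega>. \<omega> \<in> space P \<Longrightarrow> \<omega> e = undefined" by (auto simp: space_FPP PiE_def extensional_def)
    then show ?thesis using measurable_cong[of P "\<lambda>\<omega>. \<omega> e" "\<lambda>_. undefined" L] by (simp add: space_L)
  qed
  have "distr P (PiM (edges d) (\<lambda>_. L)) (\<lambda>x. \<lambda>e\<in>edges d. x e) = distr P P (\<lambda>x. x)"
    by (rule distr_cong) (auto simp: FPP_def space_PiM PiE_def extensional_def restrict_def)
  also have "\<dots> = PiM (edges d) (\<lambda>e. distr P L (\<lambda>\<omega>. \<omega> e))"
    unfolding FPP_def by (auto intro!: PiM_cong simp: PiM_component)
  finally show ?thesis using FPP.indep_vars_iff_distr_eq_PiM[OF assms rv] by (simp add: FPP_def)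
qed

lemma local_event_restrict:
  assumes A: "A \<in> sets P" and E0: "E0 \<subseteq> edges d"
    and loc: "\<And>\<omega> \<omega>'. \<omega> \<in> space P \<Longrightarrow> \<omega>' \<in> space P \<Longrightarrow> (\<forall>e\<in>E0. \<omega> e = \<omega>' e) \<Longrightarrow> \<omega> \<in> A \<longleftrightarrow> \<omega>' \<in> A"
  obtains X where "X \<in> sets (PiM E0 (\<lambda>_. L))" "A = {\<omega>\<in>space P. restrict \<omega> E0 \<in> X}"
proof -
  interpret FPP: prob_space P by (rule prob_space_FPP)
  obtain w where w: "w \<in> space P" using FPP.not_empty by blast
  define ext where "ext x = (\<lambda>e. if e \<in> E0 then x e else w e)" for x :: "(nat \<Rightarrow> int) set \<Rightarrow> ennreal"
  have ext: "ext \<in> measurable (PiM E0 (\<lambda>_. L)) P"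
    unfolding FPP_def ext_def
  proof (rule measurable_PiM_single')
    show "(\<lambda>x. if e \<in> E0 then x e else w e) \<in> measurable (PiM E0 (\<lambda>_. L)) L" for e
      by (cases "e \<in> E0") (simp_all add: measurable_component_singleton space_L)
  qed (use w E0 in \<open>auto simp: space_PiM space_L space_FPP PiE_def extensional_def\<close>)
  have restrict_space: "restrict \<omega> E0 \<in> space (PiM E0 (\<lambda>_. L))" for \<omega>
    by (auto simp: space_PiM space_L)
  have ext_iff: "ext (restrict \<omega> E0) \<in> A \<longleftrightarrow> \<omega> \<in> A" if "\<omega> \<in> space P" for \<omega>
    using loc[OF that measurable_space[OF ext restrict_space]] by (auto simp: ext_def)
  show thesis
  proof (rule that)
    show "ext -` A \<inter> space (PiM E0 (\<lambda>_. L)) \<in> sets (PiM E0 (\<lambda>_. L))"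
      by (rule measurable_sets[OF ext A])
    show "A = {\<omega>\<in>space P. restrict \<omega> E0 \<in> ext -` A \<inter> space (PiM E0 (\<lambda>_. L))}"
      using ext_iff restrict_space sets.sets_into_space[OF A] by auto
  qed
qed

lemma measure_Int_cylinder:
  assumes ne: "edges d \<noteq> {}" and E0: "E0 \<subseteq> edges d" and F: "F \<subseteq> edges d" "finite F"
    and disj: "E0 \<inter> F = {}"
    and X: "X \<in> sets (PiM E0 (\<lambda>_. L))" and S: "\<And>e. e \<in> F \<Longrightarrow> S e \<in> sets borel"
  shows "measure P ({\<omega>\<in>space P. restrict \<omega> E0 \<in> X} \<inter> {\<omega>\<in>space P. \<forall>e\<in>F. \<omega> e \<in> S e})
       = measure P {\<omega>\<in>space P. restrict \<omega> E0 \<in> X} * (\<Prod>e\<in>F. measure L (S e))"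
proof -
  interpret FPP: prob_space P by (rule prob_space_FPP)
  have indep: "FPP.indep_var (PiM E0 (\<lambda>_. L)) (\<lambda>\<omega>. restrict \<omega> E0) (PiM F (\<lambda>_. L)) (\<lambda>\<omega>. restrict \<omega> F)"
    using FPP.indep_var_restrict[OF indep_edge_weights[OF ne] disj E0 F(1)] by simp
  have Y: "PiE F S \<in> sets (PiM F (\<lambda>_. L))" using F(2) S sets_L by (intro sets_PiM_I_finite) auto
  have cyl: "{\<omega>\<in>space P. \<forall>e\<in>F. \<omega> e \<in> S e} = prod_emb (edges d) (\<lambda>_. L) F (PiE F S)"
    unfolding prod_emb_def FPP_def using F by (auto simp: space_PiM Pi_iff)
  have "measure P {\<omega>\<in>space P. \<forall>e\<in>F. \<omega> e \<in> S e} = (\<Prod>e\<in>F. measure L (S e))"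
    unfolding cyl unfolding FPP_def using measure_PiM_emb[OF F] S sets_L by auto
  moreover have "(\<lambda>\<omega>. restrict \<omega> F) -` PiE F S \<inter> space P = {\<omega>\<in>space P. \<forall>e\<in>F. \<omega> e \<in> S e}"
    by (auto simp: PiE_def Pi_def)
  moreover have "(\<lambda>\<omega>. (restrict \<omega> E0, restrict \<omega> F)) -` (X \<times> PiE F S) \<inter> space P
      = {\<omega>\<in>space P. restrict \<omega> E0 \<in> X} \<inter> {\<omega>\<in>space P. \<forall>e\<in>F. \<omega> e \<in> S e}"
    by (auto simp: PiE_def Pi_def)
  moreover have "(\<lambda>\<omega>. restrict \<omega> E0) -` X \<inter> space P = {\<omega>\<in>space P. restrict \<omega> E0 \<in> X}" by auto
  ultimately show ?thesis using FPP.indep_varD[OF indep X Y] by simp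
qed

lemma local_event_Int_cylinder_pos:
  assumes ne: "edges d \<noteq> {}" and E0: "E0 \<subseteq> edges d" and F: "F \<subseteq> edges d" "finite F"
    and disj: "E0 \<inter> F = {}" and A: "A \<in> sets P"
    and loc: "\<And>\<omega> \<omega>'. \<omega> \<in> space P \<Longrightarrow> \<omega>' \<in> space P \<Longrightarrow> (\<forall>e\<in>E0. \<omega> e = \<omega>' e) \<Longrightarrow> \<omega> \<in> A \<longleftrightarrow> \<omega>' \<in> A"
    and A_pos: "measure P A > 0"
    and S: "\<And>e. e \<in> F \<Longrightarrow> S e \<in> sets borel" and S_pos: "\<And>e. e \<in> F \<Longrightarrow> measure L (S e) > 0"
  shows "measure P (A \<inter> {\<omega>\<in>space P. \<forall>e\<in>F. \<omega> e \<in> S e}) > 0"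
proof -
  obtain X where X: "X \<in> sets (PiM E0 (\<lambda>_. L))" "A = {\<omega>\<in>space P. restrict \<omega> E0 \<in> X}"
    using local_event_restrict[OF A E0 loc] by blast
  have "measure P (A \<inter> {\<omega>\<in>space P. \<forall>e\<in>F. \<omega> e \<in> S e}) = measure P A * (\<Prod>e\<in>F. measure L (S e))"
    using measure_Int_cylinder[OF ne E0 F disj X(1) S] X(2) by simp
  moreover have "(\<Prod>e\<in>F. measure L (S e)) > 0" using S_pos by (intro prod_pos) auto
  ultimately show ?thesis using A_pos by simp
qed

lemma exists_nat_weight_bound:
  assumes "measure L {..<\<infinity>} > 0"
  obtains c :: nat where "measure L {..of_nat c} > 0"
proof -
  have "{..<\<infinity>} \<subseteq> (\<Union>c\<in>UNIV. {..(of_nat c :: ennreal)}) \<union> {}"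
    using ennreal_Ex_less_of_nat by (auto intro: less_imp_le)
  then have "\<exists>c\<in>UNIV. measure L ({..<\<infinity>} \<inter> {..of_nat c}) > 0"
    using assms sets_L by (intro prob_space.positive_piece_of_cover[OF prob_space_L]) auto
  then obtain c :: nat where "measure L ({..<\<infinity>} \<inter> {..of_nat c}) > 0" by blast
  moreover have "{..<\<infinity>} \<inter> {..of_nat c} = {..(of_nat c :: ennreal)}"
    using of_nat_less_top[of c] by (auto intro: le_less_trans)
  ultimately show thesis using that by simp
qed

lemma infinite_weight_null:
  assumes "measure L {\<infinity>} = 0" "finite E" "E \<subseteq> edges d"
  shows "(\<Union>e\<in>E. {\<omega>\<in>space P. \<omega> e \<in> {\<infinity>}}) \<in> null_sets P"
proof -
  interpret FPP: prob_space P by (rule prob_space_FPP)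
  have "{\<omega>\<in>space P. \<omega> e \<in> {\<infinity>}} \<in> null_sets P" if "e \<in> E" for e
  proof -
    have e: "e \<in> edges d" using that assms(3) by auto
    have "{\<omega>\<in>space P. \<omega> e \<in> {\<infinity>}} \<in> sets P" using measurable_edge_weight[OF e] by measurable
    moreover have "measure P {\<omega>\<in>space P. \<omega> e \<in> {\<infinity>}} = 0"
      using measure_edge_weight[OF e, of "{\<infinity>}"] assms(1) by simp
    ultimately show ?thesis by (auto simp: FPP.emeasure_eq_measure intro!: null_setsI)
  qed
  with countable_finite[OF assms(2)] show ?thesis by (auto intro!: null_sets_UN')
qed

text \<open>The events \<open>{passage \<omega> \<pi>0 < n}\<close>, for the countably many paths \<open>\<pi>0\<close> in \<open>Q\<close> and \<open>n \<in> \<nat>\<close>,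
  cover \<open>A0\<close>; with \<open>bounded\<close> they also bound the weights of \<open>Q\<close>, which then fails only on a null set.\<close>

lemma positive_piece_with_path:
  fixes Q :: "(nat \<Rightarrow> int) set" and bounded :: bool
  assumes Q: "finite Q" and A0: "A0 \<in> sets P" "measure P A0 > 0"
    and paths: "\<forall>\<omega>\<in>A0. \<exists>\<pi>. path_from d \<pi> u0 v0 \<and> set \<pi> \<subseteq> Q \<and> passage \<omega> \<pi> < \<infinity>"
    and bounded: "bounded \<Longrightarrow> measure L {\<infinity>} = 0"
  obtains \<pi>0 n where "path_from d \<pi>0 u0 v0" "set \<pi>0 \<subseteq> Q"
    "measure P (A0 \<inter> ({\<omega>\<in>space P. passage \<omega> \<pi>0 < of_nat n} \<inter>
       (if bounded then {\<omega>\<in>space P. \<forall>e\<in>edges_of d Q. \<omega> e \<le> of_nat n} else space P))) > 0"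
proof -
  interpret FPP: prob_space P by (rule prob_space_FPP)
  let ?E0 = "edges_of d Q"
  have E0: "finite ?E0" "?E0 \<subseteq> edges d"
    unfolding edges_of_def using Q by (auto intro: finite_subset[of _ "Pow Q"])
  define J where "J = {\<pi>. path_from d \<pi> u0 v0 \<and> set \<pi> \<subseteq> Q} \<times> (UNIV :: nat set)"
  define G where "G = (\<lambda>(\<pi>, n::nat). {\<omega>\<in>space P. passage \<omega> \<pi> < of_nat n} \<inter>
      (if bounded then {\<omega>\<in>space P. \<forall>e\<in>?E0. \<omega> e \<le> of_nat n} else space P))"
  define N where "N = (if bounded then (\<Union>e\<in>?E0. {\<omega>\<in>space P. \<omega> e \<in> {\<infinity>}}) else {})"
  have "countable J"
    using countable_finite[OF Q] by (intro countable_subset[of J "lists Q \<times> UNIV"]) (auto simp: J_def)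
  moreover have "G ` J \<subseteq> sets P"
  proof clarify
    fix \<pi> :: "(nat \<Rightarrow> int) list" and n :: nat
    assume "(\<pi>, n) \<in> J"
    then have "path_from d \<pi> u0 v0" by (simp add: J_def)
    then have "(\<lambda>\<omega>. passage \<omega> \<pi>) \<in> borel_measurable P"
      using path_from_adj adj_in_edges by (blast intro: measurable_passage)
    moreover have "{\<omega>\<in>space P. \<forall>e\<in>?E0. \<omega> e \<le> of_nat n} \<in> sets P"
      using cylinder_in_sets[OF E0(2,1), of "\<lambda>_. {..of_nat n}"] by simp
    ultimately show "G (\<pi>, n) \<in> sets P" by (auto simp: G_def)
  qed
  moreover have "N \<in> null_sets P"
    using infinite_weight_null[OF bounded E0] by (cases bounded) (simp_all add: N_def)
  moreover have "A0 \<subseteq> (\<Union>j\<in>J. G j) \<union> N"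
  proof
    fix \<omega> assume \<omega>: "\<omega> \<in> A0"
    then have sp: "\<omega> \<in> space P" using A0(1) sets.sets_into_space by blast
    obtain \<pi> where \<pi>: "path_from d \<pi> u0 v0" "set \<pi> \<subseteq> Q" "passage \<omega> \<pi> < \<infinity>" using paths \<omega> by blast
    obtain n1 :: nat where n1: "passage \<omega> \<pi> < of_nat n1" using ennreal_Ex_less_of_nat \<pi>(3) by auto
    show "\<omega> \<in> (\<Union>j\<in>J. G j) \<union> N"
    proof (cases "bounded \<longrightarrow> (\<forall>e\<in>?E0. \<omega> e < \<infinity>)")
      case True
      obtain n2 :: nat where n2: "bounded \<longrightarrow> (\<forall>e\<in>?E0. \<omega> e \<le> of_nat n2)"
        using ennreal_finite_set_bounded[OF E0(1), of \<omega>] True by blast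
      have "of_nat n1 \<le> (of_nat (max n1 n2) :: ennreal)" "of_nat n2 \<le> (of_nat (max n1 n2) :: ennreal)"
        by (simp_all add: of_nat_mono)
      with n1 n2 sp have "\<omega> \<in> G (\<pi>, max n1 n2)" by (auto simp: G_def intro: order_trans less_le_trans)
      moreover have "(\<pi>, max n1 n2) \<in> J" using \<pi> by (simp add: J_def)
      ultimately show ?thesis by blast
    next
      case False
      then show ?thesis using sp by (auto simp: N_def top.not_eq_extremum)
    qed
  qed
  ultimately have "\<exists>j\<in>J. measure P (A0 \<inter> G j) > 0"
    by (rule FPP.positive_piece_of_cover[OF A0])
  then obtain \<pi>0 n where "(\<pi>0, n) \<in> J" "measure P (A0 \<inter> G (\<pi>0, n)) > 0" by auto
  then show thesis using that[of \<pi>0 n] unfolding J_def G_def by simp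
qed

lemma finite_weights_pos:
  assumes "path_from d \<pi> u v" "u \<noteq> v" "measure P (A \<inter> {\<omega>\<in>space P. passage \<omega> \<pi> < of_nat n}) > 0"
  shows "measure L {..<\<infinity>} > 0"
proof -
  interpret FPP: prob_space P by (rule prob_space_FPP)
  have len: "Suc 0 < length \<pi>" by (rule path_from_length[OF assms(1,2)])
  define e where "e = {\<pi> ! 0, \<pi> ! Suc 0}"
  have e: "e \<in> edges d" unfolding e_def using path_from_adj[OF assms(1) len] adj_in_edges by blast
  have "\<omega> e < \<infinity>" if "passage \<omega> \<pi> < of_nat n" for \<omega>
    using edge_le_passage[OF len, of \<omega>] that of_nat_less_top[of n] unfolding e_def by simp
  then have "A \<inter> {\<omega>\<in>space P. passage \<omega> \<pi> < of_nat n} \<subseteq> {\<omega>\<in>space P. \<omega> e \<in> {..<\<infinity>}}"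
    by auto
  moreover have "{\<omega>\<in>space P. \<omega> e \<in> {..<\<infinity>}} \<in> sets P" using measurable_edge_weight[OF e] by measurable
  ultimately have "measure P (A \<inter> {\<omega>\<in>space P. passage \<omega> \<pi> < of_nat n})
      \<le> measure P {\<omega>\<in>space P. \<omega> e \<in> {..<\<infinity>}}"
    by (rule FPP.finite_measure_mono)
  also have "\<dots> = measure L {..<\<infinity>}" by (rule measure_edge_weight[OF e]) simp
  finally show ?thesis using assms(3) by simp
qed

end

section \<open>The extended pattern\<close>

lemma (in edge_weights) law_support_measure_pos:
  assumes "x \<in> law_support L" "open U" "x \<in> U"
  shows "measure L U > 0"
proof -
  have "emeasure L U > 0" using assms by (auto simp: law_support_def)
  then show ?thesis by (simp add: M.emeasure_eq_measure)
qed

text \<open>In case (FU) the threshold \<open>TB\<close> exceeds the cost of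
  \<open>path1 @ \<pi>0 @ path2\<close>, and \<open>r0\<close>, a point of the support above \<open>TB\<close>, bounds interior edges.\<close>

locale pattern_construction =
  corridors d Li a i s a' b j \<sigma> b' N K R l + edge_weights d L
  for d Li a i s a' b j \<sigma> b' N K R l L +
  fixes A0 :: "((nat \<Rightarrow> int) set \<Rightarrow> ennreal) set" and \<pi>0 :: "(nat \<Rightarrow> int) list" and n :: nat
  assumes A0_local: "local_event d L Q A0"
    and law_cases: "measure L {\<infinity>} > 0 \<or> (measure L {\<infinity>} = 0 \<and> unbounded_support L)"
    and \<pi>0: "path_from d \<pi>0 a b" "set \<pi>0 \<subseteq> Q"
    and A0_piece_pos: "measure P (A0 \<inter> ({\<omega>\<in>space P. passage \<omega> \<pi>0 < of_nat n} \<inter>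
       (if measure L {\<infinity>} = 0 then {\<omega>\<in>space P. \<forall>e\<in>edges_of d Q. \<omega> e \<le> of_nat n} else space P))) > 0"
begin

definition "Q_edges = edges_of d Q"
definition "A0_piece = A0 \<inter> ({\<omega>\<in>space P. passage \<omega> \<pi>0 < of_nat n} \<inter>
  (if measure L {\<infinity>} = 0 then {\<omega>\<in>space P. \<forall>e\<in>Q_edges. \<omega> e \<le> of_nat n} else space P))"
definition "c = (SOME c :: nat. measure L {..of_nat c} > 0)"
definition "cheap_edges = edges_of d C1 \<union> edges_of d C2 \<union> {{a, a'}, {b, b'}}"
definition "outer_edges = edges_of d Bl - Q_edges"
definition "TB = real ((length path1 + length path2) * c + n) + 1"
definition "r0 = (SOME r. ennreal TB < ennreal r \<and> ennreal r \<in> law_support L \<and> 0 \<le> r)"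
definition "weight_range e =
  (if e \<in> cheap_edges then {..of_nat c}
   else if measure L {\<infinity>} = 0 then
     (if e \<in> edges_of d (vboundary d Bl) then {ennreal TB<..} else {ennreal TB<..<ennreal (r0 + 1)})
   else {\<infinity>})"
definition "A = A0_piece \<inter> {\<omega>\<in>space P. \<forall>e\<in>outer_edges. \<omega> e \<in> weight_range e}"

lemma Q_edges_subset: "Q_edges \<subseteq> edges d" and outer_edges_subset: "outer_edges \<subseteq> edges d"
  and Q_edges_outer_edges_disjoint: "Q_edges \<inter> outer_edges = {}"
  by (auto simp: Q_edges_def outer_edges_def edges_of_def)

lemma finite_Q_edges: "finite Q_edges" and finite_outer_edges: "finite outer_edges"
  unfolding Q_edges_def outer_edges_def edges_of_def
  using finite_int_box by (auto intro: finite_subset[of _ "Pow (int_box _ _ _)"])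

lemma edges_nonempty: "edges d \<noteq> {}"
  using adj_unit_step[OF axis_pt_Zd[OF zero_lt_d] zero_lt_d, of 1] adj_in_edges by blast

lemma passage_\<pi>0_local:
  assumes "\<forall>e\<in>Q_edges. \<omega> e = \<omega>' e"
  shows "passage \<omega> \<pi>0 = passage \<omega>' \<pi>0"
proof (rule passage_cong)
  fix k assume "Suc k < length \<pi>0"
  then have "{\<pi>0 ! k, \<pi>0 ! Suc k} \<in> Q_edges" unfolding Q_edges_def by (rule path_from_edges_of[OF \<pi>0])
  with assms show "\<omega> {\<pi>0 ! k, \<pi>0 ! Suc k} = \<omega>' {\<pi>0 ! k, \<pi>0 ! Suc k}" by blast
qed

lemma A0_piece_in_sets: "A0_piece \<in> sets P"
proof -
  have "(\<lambda>\<omega>. passage \<omega> \<pi>0) \<in> borel_measurable P"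
    using path_from_edges_of[OF \<pi>0] Q_edges_subset by (intro measurable_passage) (auto simp: Q_edges_def)
  then have "{\<omega>\<in>space P. passage \<omega> \<pi>0 < of_nat n} \<in> sets P" by measurable
  moreover have "{\<omega>\<in>space P. \<forall>e\<in>Q_edges. \<omega> e \<le> of_nat n} \<in> sets P"
    using cylinder_in_sets[OF Q_edges_subset finite_Q_edges, of "\<lambda>_. {..of_nat n}"] by simp
  ultimately show ?thesis using A0_local by (auto simp: A0_piece_def local_event_def)
qed

lemma A0_piece_local:
  assumes "\<omega> \<in> space P" "\<omega>' \<in> space P" and agree: "\<forall>e\<in>Q_edges. \<omega> e = \<omega>' e"
  shows "\<omega> \<in> A0_piece \<longleftrightarrow> \<omega>' \<in> A0_piece"
proof -
  have "\<omega> \<in> A0 \<longleftrightarrow> \<omega>' \<in> A0"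
    using A0_local assms unfolding local_event_def Q_edges_def by blast
  moreover have "passage \<omega> \<pi>0 = passage \<omega>' \<pi>0" by (rule passage_\<pi>0_local[OF agree])
  ultimately show ?thesis using assms by (simp add: A0_piece_def)
qed

lemma c_pos: "measure L {..of_nat c} > 0"
proof -
  let ?G = "{\<omega>\<in>space P. passage \<omega> \<pi>0 < of_nat n}"
  let ?X = "if measure L {\<infinity>} = 0 then {\<omega>\<in>space P. \<forall>e\<in>edges_of d Q. \<omega> e \<le> of_nat n} else space P"
  have "A0 \<inter> (?G \<inter> ?X) = (A0 \<inter> ?X) \<inter> ?G" by blast
  then have "measure L {..<\<infinity>} > 0"
    using finite_weights_pos[OF \<pi>0(1) a_neq_b, of "A0 \<inter> ?X" n] A0_piece_pos by simp
  then obtain c' :: nat where "measure L {..of_nat c'} > 0" by (rule exists_nat_weight_bound)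
  then show ?thesis unfolding c_def by (rule someI)
qed

lemma support_above:
  assumes "measure L {\<infinity>} = 0"
  obtains x where "x \<in> law_support L" "ennreal M < x" "x < \<infinity>"
proof -
  have "unbounded_support L" using law_cases assms by auto
  then have "\<exists>x\<in>law_support L. ennreal M < x \<and> x < \<infinity>" unfolding unbounded_support_def by (rule spec)
  with that show thesis by blast
qed

lemma r0: "measure L {\<infinity>} = 0 \<Longrightarrow> ennreal TB < ennreal r0 \<and> ennreal r0 \<in> law_support L \<and> 0 \<le> r0"
proof -
  assume "measure L {\<infinity>} = 0"
  then obtain x where x: "x \<in> law_support L" "ennreal TB < x" "x < \<infinity>"
    by (rule support_above[where M = TB])
  obtain r where "0 \<le> r" "x = ennreal r" using x(3) by (cases x rule: ennreal_cases) simp_all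
  with x have "\<exists>r. ennreal TB < ennreal r \<and> ennreal r \<in> law_support L \<and> 0 \<le> r" by blast
  then show ?thesis unfolding r0_def by (rule someI_ex)
qed

lemma weight_range_borel: "weight_range e \<in> sets borel"
  by (auto simp: weight_range_def)

lemma measure_above_pos:
  assumes "measure L {\<infinity>} = 0" shows "measure L {ennreal M<..} > 0"
proof -
  obtain x where "x \<in> law_support L" "ennreal M < x" using support_above[OF assms] by blast
  then show ?thesis by (intro law_support_measure_pos) auto
qed

lemma weight_range_pos: "measure L (weight_range e) > 0"
proof -
  consider "e \<in> cheap_edges" | "e \<notin> cheap_edges" "measure L {\<infinity>} \<noteq> 0"
    | "e \<notin> cheap_edges" "measure L {\<infinity>} = 0" "e \<in> edges_of d (vboundary d Bl)"
    | "e \<notin> cheap_edges" "measure L {\<infinity>} = 0" "e \<notin> edges_of d (vboundary d Bl)"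
    by blast
  then show ?thesis
  proof cases
    case 2
    then have "measure L {\<infinity>} > 0" using measure_nonneg[of L "{\<infinity>}"] by linarith
    with 2 show ?thesis by (simp add: weight_range_def)
  next
    case 4
    with r0 have "ennreal TB < ennreal r0" "ennreal r0 \<in> law_support L" "0 \<le> r0" by auto
    then have "measure L {ennreal TB<..<ennreal (r0 + 1)} > 0"
      by (intro law_support_measure_pos) (auto simp: ennreal_lessI)
    with 4 show ?thesis by (simp add: weight_range_def)
  qed (use c_pos measure_above_pos in \<open>auto simp: weight_range_def\<close>)
qed

lemma A_in_sets: "A \<in> sets P"
  unfolding A_def using A0_piece_in_sets cylinder_in_sets[OF outer_edges_subset finite_outer_edges weight_range_borel] by auto

lemma A_pos: "measure P A > 0"
proof -
  have pos: "measure P A0_piece > 0" using A0_piece_pos unfolding A0_piece_def Q_edges_def .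
  show ?thesis unfolding A_def
  proof (rule local_event_Int_cylinder_pos[where S = weight_range, OF edges_nonempty Q_edges_subset outer_edges_subset
        finite_outer_edges Q_edges_outer_edges_disjoint A0_piece_in_sets _ pos])
    show "\<omega> \<in> A0_piece \<longleftrightarrow> \<omega>' \<in> A0_piece" if "\<omega> \<in> space P" "\<omega>' \<in> space P" "\<forall>e\<in>Q_edges. \<omega> e = \<omega>' e"
      for \<omega> \<omega>' using A0_piece_local[OF that] .
  qed (simp_all add: weight_range_borel weight_range_pos)
qed

lemma A_local: "local_event d L Bl A"
  unfolding local_event_def
proof (intro conjI ballI impI)
  show "A \<in> sets P" by (rule A_in_sets)
  fix \<omega> \<omega>' assume \<omega>: "\<omega> \<in> space P" "\<omega>' \<in> space P" and agree: "\<forall>e\<in>edges_of d Bl. \<omega> e = \<omega>' e"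
  have "Q_edges \<subseteq> edges_of d Bl" using subset_Bl(3) by (auto simp: Q_edges_def edges_of_def)
  then have "\<omega> \<in> A0_piece \<longleftrightarrow> \<omega>' \<in> A0_piece" using A0_piece_local[OF \<omega>] agree by blast
  moreover have "\<forall>e\<in>outer_edges. \<omega> e = \<omega>' e" using agree by (auto simp: outer_edges_def)
  ultimately show "\<omega> \<in> A \<longleftrightarrow> \<omega>' \<in> A" using \<omega> by (auto simp: A_def)
qed

lemma A_subset_A0: "A \<subseteq> A0"
  by (auto simp: A_def A0_piece_def)

lemma cheap_edges_subset_outer_edges: "cheap_edges \<subseteq> outer_edges"
proof -
  have "e \<notin> Q_edges" if "e \<in> cheap_edges" for e
    using that C1_Q_disjoint C2_Q_disjoint a_exit(6) b_exit(6)
    by (auto simp: cheap_edges_def Q_edges_def edges_of_def edges_def)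
  moreover have "cheap_edges \<subseteq> edges_of d Bl"
    using subset_Bl a_exit(1,5,7) b_exit(1,5,7) adj_in_edges
    by (auto simp: cheap_edges_def edges_of_def)
  ultimately show ?thesis by (auto simp: outer_edges_def)
qed

lemma weight_in_range: "\<omega> \<in> A \<Longrightarrow> e \<in> outer_edges \<Longrightarrow> \<omega> e \<in> weight_range e"
  by (simp add: A_def)

lemma cheap_edge_le: "\<omega> \<in> A \<Longrightarrow> e \<in> cheap_edges \<Longrightarrow> \<omega> e \<le> of_nat c"
  using weight_in_range[of \<omega> e] cheap_edges_subset_outer_edges by (auto simp: weight_range_def)

lemma passage_corridor_le:
  assumes "\<omega> \<in> A" "path_from d p x y" "set p \<subseteq> C" "C = C1 \<or> C = C2"
  shows "passage \<omega> p \<le> of_nat (length p - 1) * of_nat c"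
proof (rule passage_le_uniform)
  fix k assume "Suc k < length p"
  then have "{p ! k, p ! Suc k} \<in> cheap_edges"
    using path_from_edges_of[OF assms(2,3)] assms(4) by (auto simp: cheap_edges_def)
  then show "\<omega> {p ! k, p ! Suc k} \<le> of_nat c" by (rule cheap_edge_le[OF assms(1)])
qed

definition "\<rho> = path1 @ \<pi>0 @ path2"

lemma \<rho>_path: "path_from d \<rho> (axis_pt (-l)) (axis_pt l)" and \<rho>_subset_Bl: "set \<rho> \<subseteq> Bl"
  unfolding \<rho>_def
  using path_from_append3[OF path1(1) \<pi>0(1) path2(1) adj_sym[OF a_exit(7)] b_exit(7)]
    path1(2) path2(2) \<pi>0(2) subset_Bl by auto

lemma passage_\<rho>_lt:
  assumes \<omega>: "\<omega> \<in> A"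
  shows "passage \<omega> \<rho> < ennreal TB"
proof -
  let ?len = "\<lambda>p. of_nat (length p - 1) * (of_nat c :: ennreal)"
  have ne: "path1 \<noteq> []" "\<pi>0 \<noteq> []" "path2 \<noteq> []" and ends: "last path1 = a'" "hd \<pi>0 = a" "last \<pi>0 = b" "hd path2 = b'"
    using path1(1) \<pi>0(1) path2(1) by (auto simp: path_from_def is_path_def)
  have "passage \<omega> \<rho> = passage \<omega> path1 + \<omega> {a', a} + (passage \<omega> \<pi>0 + \<omega> {b, b'} + passage \<omega> path2)"
    unfolding \<rho>_def using ne ends by (simp add: passage_append)
  also have "\<dots> \<le> ?len path1 + of_nat c + (passage \<omega> \<pi>0 + of_nat c + ?len path2)"
    using passage_corridor_le[OF \<omega> path1] passage_corridor_le[OF \<omega> path2]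
      cheap_edge_le[OF \<omega>, of "{a', a}"] cheap_edge_le[OF \<omega>, of "{b, b'}"]
    by (intro add_mono order_refl) (auto simp: cheap_edges_def insert_commute)
  also have "\<dots> = of_nat ((length path1 + length path2) * c) + passage \<omega> \<pi>0"
  proof -
    have eq: "(length path1 - 1) * c + c + (c + (length path2 - 1) * c) = (length path1 + length path2) * c"
      using ne by (cases "length path1"; cases "length path2") (auto simp: algebra_simps)
    show ?thesis unfolding eq[symmetric] by (simp add: ac_simps)
  qed
  also have "\<dots> < of_nat ((length path1 + length path2) * c) + of_nat n"
  proof -
    have "passage \<omega> \<pi>0 < of_nat n" using \<omega> by (simp add: A_def A0_piece_def)
    then show ?thesis unfolding ennreal_add_left_cancel_less infinity_ennreal_def
      using ennreal_of_nat_neq_top by blast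
  qed
  also have "\<dots> < ennreal TB"
    unfolding TB_def by (simp add: ennreal_of_nat_eq_real_of_nat ennreal_lessI)
  finally show ?thesis .
qed

lemma expensive_edge_ge: "\<omega> \<in> A \<Longrightarrow> e \<in> outer_edges \<Longrightarrow> e \<notin> cheap_edges \<Longrightarrow> ennreal TB \<le> \<omega> e"
  using weight_in_range[of \<omega> e] by (auto simp: weight_range_def split: if_splits)

lemma edge_of_Bl_cases: "e \<in> edges_of d Bl \<Longrightarrow> e \<in> Q_edges \<or> e \<in> outer_edges"
  by (auto simp: outer_edges_def)

text \<open>A geodesic is cheaper than \<open>\<rho>\<close>, hence than \<open>TB\<close>, so it only uses cheap edges and edges of
  \<open>Q\<close>; these join \<open>C1\<close>, \<open>Q\<close> and \<open>C2\<close> only through the gates \<open>a'a\<close> and \<open>bb'\<close>.\<close>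

lemma optimal_has_subpath:
  assumes \<omega>: "\<omega> \<in> A" and opt: "optimal_in d \<omega> Bl (axis_pt (-l)) (axis_pt l) \<pi>"
  shows "has_subpath d \<pi> Q a b"
proof -
  have \<pi>: "path_from d \<pi> (axis_pt (-l)) (axis_pt l)" "set \<pi> \<subseteq> Bl" using opt by (auto simp: optimal_in_def)
  have "passage \<omega> \<pi> \<le> passage \<omega> \<rho>" using opt \<rho>_path \<rho>_subset_Bl by (auto simp: optimal_in_def)
  then have cheap_path: "passage \<omega> \<pi> < ennreal TB" using passage_\<rho>_lt[OF \<omega>] by simp
  define R where "R x y \<longleftrightarrow> {x, y} \<in> cheap_edges \<or> {x, y} \<in> Q_edges" for x y
  have walk: "successively R \<pi>"
    unfolding successively_conv_nth
  proof (intro allI impI)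
    fix k assume k: "Suc k < length \<pi>"
    have e: "{\<pi> ! k, \<pi> ! Suc k} \<in> edges_of d Bl" by (rule path_from_edges_of[OF \<pi> k])
    have "\<omega> {\<pi> ! k, \<pi> ! Suc k} < ennreal TB" using edge_le_passage[OF k, of \<omega>] cheap_path by simp
    then show "R (\<pi> ! k) (\<pi> ! Suc k)"
      using edge_of_Bl_cases[OF e] expensive_edge_ge[OF \<omega>] by (force simp: R_def)
  qed
  have steps: "(x \<in> C1 \<and> y \<in> C1) \<or> (x \<in> C2 \<and> y \<in> C2) \<or> (x \<in> Q \<and> y \<in> Q)
      \<or> {x, y} = {a, a'} \<or> {x, y} = {b, b'}" if "R x y" for x y
    using that unfolding R_def cheap_edges_def Q_edges_def edges_of_def by blast
  have ends: "\<pi> \<noteq> []" "hd \<pi> \<in> C1" "last \<pi> \<in> C2"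
    using \<pi>(1) axis_pts_in_corridors by (auto simp: path_from_def is_path_def)
  obtain xs ys zs where ys: "\<pi> = xs @ ys @ zs" "ys \<noteq> []" "hd ys = a" "last ys = b" "set ys \<subseteq> Q"
    using walk_through_gates[OF C1_C2_disjoint C1_Q_disjoint C2_Q_disjoint a_exit(1) a'_in_C1 b_exit(1) b'_in_C2
        steps walk ends] by blast
  then have "is_path d ys" using is_path_infix \<pi>(1) by blast
  with ys show ?thesis unfolding has_subpath_def path_from_def by blast
qed

lemma boundary_condition_A:
  assumes inf: "measure L {\<infinity>} \<noteq> 0" and \<omega>: "\<omega> \<in> A"
  shows "boundary_condition d \<omega> (\<lambda>_. 0) l"
  unfolding boundary_condition_def
proof
  fix e assume "e \<in> edges_of d (ball_inf d (\<lambda>_. 0) l) - edges_of d (ball_inf d (\<lambda>_. 0) (l - 3))"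
  moreover have "l - 3 = R" using l_eq by simp
  ultimately have e: "e \<in> edges_of d Bl" "e \<notin> edges_of d BR"
    by (simp_all add: ball_inf_eq_int_box)
  have "Q_edges \<subseteq> edges_of d BR" using Q_subset_Q1 Q1_subset_BR by (auto simp: Q_edges_def edges_of_def)
  then have "e \<in> outer_edges" using e by (auto simp: outer_edges_def)
  show "((e \<in> S_edges (\<lambda>_. 0) l \<or> e \<subseteq> line1 (\<lambda>_. 0)) \<and> \<omega> e < \<infinity>) \<or> \<omega> e = \<infinity>"
  proof (cases "e \<in> cheap_edges")
    case False
    with inf have "weight_range e = {\<infinity>}" by (simp add: weight_range_def)
    then show ?thesis using weight_in_range[OF \<omega> \<open>e \<in> outer_edges\<close>] by simp
  next
    case True
    have "\<omega> e \<le> of_nat c" by (rule cheap_edge_le[OF \<omega> True])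
    then have "\<omega> e < \<infinity>" using of_nat_less_top[of c] unfolding infinity_ennreal_def by (rule le_less_trans)
    moreover have "e \<subseteq> line1 (\<lambda>_. 0)"
    proof -
      have "{a, a'} \<subseteq> BR" "{b, b'} \<subseteq> BR"
        using a_exit(1,5) b_exit(1,5) Q_subset_Q1 Q1_subset_BR by auto
      with e have "e \<notin> {{a, a'}, {b, b'}}" by (auto simp: edges_of_def)
      with True have eC: "e \<in> edges_of d C1 \<or> e \<in> edges_of d C2" unfolding cheap_edges_def by blast
      obtain x y where xy: "e = {x, y}" "adj d x y" using e(1) unfolding edges_of_def edges_def by blast
      have "(x \<in> C1 \<and> y \<in> C1) \<or> (x \<in> C2 \<and> y \<in> C2)" using eC xy(1) unfolding edges_of_def by auto
      moreover have "\<not> (x \<in> BR \<and> y \<in> BR)" using e xy(1) by (auto simp: edges_of_def)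
      ultimately have "{x, y} \<subseteq> line1 (\<lambda>_. 0)" using corridor_edge_on_axis xy(2) by blast
      then show ?thesis using xy(1) by simp
    qed
    ultimately show ?thesis by simp
  qed
qed

abbreviation "Eb \<equiv> edges_of d (vboundary d Bl)"

lemma boundary_edges_subset_outer_edges: "Eb \<subseteq> outer_edges"
proof
  fix e assume e: "e \<in> Eb"
  then obtain x y where xy: "e = {x, y}" "x \<in> vboundary d Bl" by (auto simp: edges_of_def edges_def)
  then have "x \<notin> Q" using BR_vboundary_disjoint Q_subset_Q1 Q1_subset_BR by blast
  then have "e \<notin> Q_edges" using xy by (auto simp: Q_edges_def edges_of_def)
  moreover have "e \<in> edges_of d Bl" using e by (auto simp: edges_of_def vboundary_def)
  ultimately show "e \<in> outer_edges" by (simp add: outer_edges_def)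
qed

lemma boundary_edges_not_cheap: "Eb \<inter> cheap_edges = {}"
proof -
  have "e \<notin> Eb" if eC: "e \<in> edges_of d C" "C = C1 \<or> C = C2" for e C
  proof
    assume "e \<in> Eb"
    obtain x y where xy: "e = {x, y}" "adj d x y" using eC(1) unfolding edges_of_def edges_def by blast
    then have "x \<in> C" "y \<in> C" "x \<in> vboundary d Bl" "y \<in> vboundary d Bl"
      using eC(1) \<open>e \<in> Eb\<close> by (auto simp: edges_of_def)
    then have "x = y" using eC(2) corridor_vboundary by metis
    with adj_neq[OF xy(2)] show False by simp
  qed
  moreover have "a \<notin> vboundary d Bl" "b \<notin> vboundary d Bl"
    using a_exit(1) b_exit(1) BR_vboundary_disjoint Q_subset_Q1 Q1_subset_BR by blast+
  ultimately show ?thesis by (auto simp: cheap_edges_def edges_of_def)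
qed

lemma interior_weights_bounded:
  assumes fu: "measure L {\<infinity>} = 0" and \<omega>: "\<omega> \<in> A" and e: "e \<in> edges_of d Bl - Eb"
  shows "\<omega> e \<le> ennreal (real n + real c + r0 + 1)"
proof -
  have r0: "0 \<le> r0" using r0[OF fu] by simp
  consider "e \<in> Q_edges" | "e \<in> outer_edges" "e \<in> cheap_edges" | "e \<in> outer_edges" "e \<notin> cheap_edges"
    using edge_of_Bl_cases e by blast
  then show ?thesis
  proof cases
    case 1
    then have "\<omega> e \<le> of_nat n" using \<omega> fu by (auto simp: A_def A0_piece_def)
    also have "\<dots> \<le> ennreal (real n + real c + r0 + 1)" using r0 by (simp add: ennreal_of_nat_eq_real_of_nat)
    finally show ?thesis .
  next
    case 2
    then have "\<omega> e \<le> of_nat c" using cheap_edge_le[OF \<omega>] by blast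
    also have "\<dots> \<le> ennreal (real n + real c + r0 + 1)" using r0 by (simp add: ennreal_of_nat_eq_real_of_nat)
    finally show ?thesis .
  next
    case 3
    with fu e have "weight_range e = {ennreal TB<..<ennreal (r0 + 1)}"
      unfolding weight_range_def by simp
    then have "\<omega> e < ennreal (r0 + 1)" using weight_in_range[OF \<omega> \<open>e \<in> outer_edges\<close>] by simp
    also have "\<dots> \<le> ennreal (real n + real c + r0 + 1)" by (intro ennreal_leI) simp
    finally show ?thesis by simp
  qed
qed

lemma boundary_weights_large_pos:
  assumes fu: "measure L {\<infinity>} = 0"
  shows "measure P (A \<inter> {\<omega>. \<forall>e\<in>Eb. \<omega> e > ennreal M}) > 0"
proof -
  define S where "S e = (if e \<in> Eb then weight_range e \<inter> {ennreal M<..} else weight_range e)" for e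
  have eq: "A \<inter> {\<omega>. \<forall>e\<in>Eb. \<omega> e > ennreal M} = A0_piece \<inter> {\<omega>\<in>space P. \<forall>e\<in>outer_edges. \<omega> e \<in> S e}"
    using boundary_edges_subset_outer_edges by (auto simp: A_def S_def)
  have S_pos: "measure L (S e) > 0" for e
  proof (cases "e \<in> Eb")
    case True
    then have "e \<notin> cheap_edges" using boundary_edges_not_cheap by blast
    with True fu have "S e = {ennreal TB<..} \<inter> {ennreal M<..}" by (simp add: S_def weight_range_def)
    also have "\<dots> = {ennreal (max TB M)<..}"
    proof (cases "TB \<le> M")
      case True
      then have "ennreal TB \<le> ennreal M" by (rule ennreal_leI)
      with True show ?thesis by (auto simp: max_def intro: le_less_trans)
    next
      case False
      then have "ennreal M \<le> ennreal TB" by (intro ennreal_leI) simp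
      with False show ?thesis by (auto simp: max_def intro: le_less_trans)
    qed
    finally show ?thesis using measure_above_pos[OF fu] by simp
  qed (simp add: S_def weight_range_pos)
  have pos: "measure P A0_piece > 0" using A0_piece_pos unfolding A0_piece_def Q_edges_def .
  have "measure P (A0_piece \<inter> {\<omega>\<in>space P. \<forall>e\<in>outer_edges. \<omega> e \<in> S e}) > 0"
  proof (rule local_event_Int_cylinder_pos[where S = S, OF edges_nonempty Q_edges_subset outer_edges_subset finite_outer_edges
        Q_edges_outer_edges_disjoint A0_piece_in_sets _ pos])
    show "\<omega> \<in> A0_piece \<longleftrightarrow> \<omega>' \<in> A0_piece" if "\<omega> \<in> space P" "\<omega>' \<in> space P" "\<forall>e\<in>Q_edges. \<omega> e = \<omega>' e"
      for \<omega> \<omega>' using A0_piece_local[OF that] .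
    show "S e \<in> sets borel" for e using weight_range_borel[of e] by (auto simp: S_def)
  qed (rule S_pos)
  with eq show ?thesis by simp
qed

lemma extended_pattern:
  "\<exists>B u v A'. pattern d L B u v A'
     \<and> Q \<subseteq> B
     \<and> measure P A' > 0
     \<and> (\<forall>\<omega>\<in>A'. \<forall>\<pi>. optimal_in d \<omega> B u v \<pi> \<longrightarrow> has_subpath d \<pi> Q a b)
     \<and> A' \<subseteq> A0
     \<and> (measure L {\<infinity>} > 0 \<longrightarrow>
          (\<exists>l::int. l \<ge> 3 \<and> B = ball_inf d (\<lambda>_. 0) l
             \<and> u = vscale (- l) (uvec 0) \<and> v = vscale l (uvec 0)
             \<and> (\<exists>TB::real. TB > 0 \<and> (\<exists>\<pi>. path_from d \<pi> u v \<and> set \<pi> \<subseteq> B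
                   \<and> (\<forall>\<omega>\<in>A'. passage \<omega> \<pi> < ennreal TB)))
             \<and> (\<forall>\<omega>\<in>A'. boundary_condition d \<omega> (\<lambda>_. 0) l)))
     \<and> (measure L {\<infinity>} = 0 \<and> unbounded_support L \<longrightarrow>
          (\<exists>l::int. l > 0 \<and> B = ball_inf d (\<lambda>_. 0) l
             \<and> u = vscale (- l) (uvec 0) \<and> v = vscale l (uvec 0)
             \<and> (\<exists>MB::real. \<forall>\<omega>\<in>A'. \<forall>e \<in> edges_of d B - edges_of d (vboundary d B).
                   \<omega> e \<le> ennreal MB)
             \<and> (\<forall>M::real. M > 0 \<longrightarrow>
                   measure P (A' \<inter> {\<omega>. \<forall>e \<in> edges_of d (vboundary d B). \<omega> e > ennreal M}) > 0)))"
proof -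
  have B: "ball_inf d (\<lambda>_. 0) l = Bl" by (simp add: ball_inf_eq_int_box)
  have uv: "vscale (- l) (uvec 0) = axis_pt (-l)" "vscale l (uvec 0) = axis_pt l"
    by (simp_all add: vscale_uvec0_eq_axis_pt)
  have "pattern d L Bl (axis_pt (-l)) (axis_pt l) A"
    unfolding pattern_def
  proof (intro conjI)
    show "is_box d Bl"
      unfolding is_box_def int_box_def using l_pos by (intro exI[of _ "\<lambda>_. -l"] exI[of _ "\<lambda>_. l"]) auto
    show "axis_pt (-l) \<in> vboundary d Bl" "axis_pt l \<in> vboundary d Bl"
      using zero_lt_d l_pos by (auto intro!: axis_pt_in_vboundary_cube)
    show "axis_pt (-l) \<noteq> axis_pt l" using l_pos by (auto simp: axis_pt_def fun_eq_iff)
  qed (rule A_local)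
  show ?thesis
  proof (rule exI[of _ "ball_inf d (\<lambda>_. 0) l"], rule exI[of _ "vscale (- l) (uvec 0)"],
      rule exI[of _ "vscale l (uvec 0)"], rule exI[of _ A], intro conjI impI)
    show "pattern d L (ball_inf d (\<lambda>_. 0) l) (vscale (- l) (uvec 0)) (vscale l (uvec 0)) A"
      unfolding B uv by fact
    show "Q \<subseteq> ball_inf d (\<lambda>_. 0) l" unfolding B by (rule subset_Bl(3))
    show "\<forall>\<omega>\<in>A. \<forall>\<pi>. optimal_in d \<omega> (ball_inf d (\<lambda>_. 0) l) (vscale (- l) (uvec 0)) (vscale l (uvec 0)) \<pi>
        \<longrightarrow> has_subpath d \<pi> Q a b"
      unfolding B uv using optimal_has_subpath by blast
  next
    assume "measure L {\<infinity>} > 0"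
    moreover have "TB > 0" unfolding TB_def by (simp add: add_pos_nonneg del: of_nat_add of_nat_mult)
    ultimately show "\<exists>l'::int. l' \<ge> 3 \<and> ball_inf d (\<lambda>_. 0) l = ball_inf d (\<lambda>_. 0) l'
        \<and> vscale (- l) (uvec 0) = vscale (- l') (uvec 0) \<and> vscale l (uvec 0) = vscale l' (uvec 0)
        \<and> (\<exists>TB::real. TB > 0 \<and> (\<exists>\<pi>. path_from d \<pi> (vscale (- l) (uvec 0)) (vscale l (uvec 0))
              \<and> set \<pi> \<subseteq> ball_inf d (\<lambda>_. 0) l \<and> (\<forall>\<omega>\<in>A. passage \<omega> \<pi> < ennreal TB)))
        \<and> (\<forall>\<omega>\<in>A. boundary_condition d \<omega> (\<lambda>_. 0) l')"
      using three_le_l \<rho>_path \<rho>_subset_Bl passage_\<rho>_lt boundary_condition_A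
      by (intro exI[of _ l] conjI exI[of _ TB] exI[of _ \<rho>]) (auto simp: B uv)
  next
    assume "measure L {\<infinity>} = 0 \<and> unbounded_support L"
    then show "\<exists>l'::int. l' > 0 \<and> ball_inf d (\<lambda>_. 0) l = ball_inf d (\<lambda>_. 0) l'
        \<and> vscale (- l) (uvec 0) = vscale (- l') (uvec 0) \<and> vscale l (uvec 0) = vscale l' (uvec 0)
        \<and> (\<exists>MB::real. \<forall>\<omega>\<in>A. \<forall>e \<in> edges_of d (ball_inf d (\<lambda>_. 0) l)
              - edges_of d (vboundary d (ball_inf d (\<lambda>_. 0) l)). \<omega> e \<le> ennreal MB)
        \<and> (\<forall>M::real. M > 0 \<longrightarrow> measure P (A \<inter> {\<omega>. \<forall>e \<in> edges_of d (vboundary d (ball_inf d (\<lambda>_. 0) l)).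
              \<omega> e > ennreal M}) > 0)"
      using l_pos interior_weights_bounded boundary_weights_large_pos
      by (intro exI[of _ l] conjI exI[of _ "real n + real c + r0 + 1"]) (auto simp: B)
  qed (use A_pos A_subset_A0 in auto)
qed

end

theorem lemma2p4:
  fixes d :: nat and L :: "ennreal measure" and Ls :: "nat \<Rightarrow> nat"
    and u0 v0 :: "nat \<Rightarrow> int" and A0 :: "((nat \<Rightarrow> int) set \<Rightarrow> ennreal) set"
  assumes "d \<ge> 2"
    and "prob_space L" and "sets L = sets borel"
    and "useful d L"
    and "measure L {..<\<infinity>} > p_c d"
    and "measure L {\<infinity>} > 0 \<or> (measure L {\<infinity>} = 0 \<and> unbounded_support L)"
    and "\<exists>i<d. Ls i > 0"
    and "valid_pattern d L (box0 d Ls) u0 v0 A0"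
  shows "\<exists>B u v A. pattern d L B u v A
     \<and> box0 d Ls \<subseteq> B
     \<and> measure (FPP d L) A > 0
     \<and> (\<forall>\<omega>\<in>A. \<forall>\<pi>. optimal_in d \<omega> B u v \<pi> \<longrightarrow> has_subpath d \<pi> (box0 d Ls) u0 v0)
     \<and> A \<subseteq> A0
     \<and> (measure L {\<infinity>} > 0 \<longrightarrow>
          (\<exists>l::int. l \<ge> 3 \<and> B = ball_inf d (\<lambda>_. 0) l
             \<and> u = vscale (- l) (uvec 0) \<and> v = vscale l (uvec 0)
             \<and> (\<exists>TB::real. TB > 0 \<and> (\<exists>\<pi>. path_from d \<pi> u v \<and> set \<pi> \<subseteq> B
                   \<and> (\<forall>\<omega>\<in>A. passage \<omega> \<pi> < ennreal TB)))
             \<and> (\<forall>\<omega>\<in>A. boundary_condition d \<omega> (\<lambda>_. 0) l)))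
     \<and> (measure L {\<infinity>} = 0 \<and> unbounded_support L \<longrightarrow>
          (\<exists>l::int. l > 0 \<and> B = ball_inf d (\<lambda>_. 0) l
             \<and> u = vscale (- l) (uvec 0) \<and> v = vscale l (uvec 0)
             \<and> (\<exists>MB::real. \<forall>\<omega>\<in>A. \<forall>e \<in> edges_of d B - edges_of d (vboundary d B).
                   \<omega> e \<le> ennreal MB)
             \<and> (\<forall>M::real. M > 0 \<longrightarrow>
                   measure (FPP d L) (A \<inter> {\<omega>. \<forall>e \<in> edges_of d (vboundary d B). \<omega> e > ennreal M}) > 0)))"
proof -
  define Li where "Li k = (if k < d then int (Ls k) else 0)" for k
  define N where "N = (\<Sum>k<d. int (Ls k))"
  have Q: "box0 d Ls = int_box d (\<lambda>_. 0) Li" unfolding Li_def by (rule box0_eq_int_box)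
  have Li_le_N: "Li k \<le> N" for k
    unfolding Li_def N_def by (auto intro: member_le_sum sum_nonneg)
  interpret edge_weights d L by (rule edge_weights.intro) (use assms(2,3) in auto)
  have pat: "pattern d L (int_box d (\<lambda>_. 0) Li) u0 v0 A0" and pos: "measure P A0 > 0"
    and paths: "\<forall>\<omega>\<in>A0. \<exists>\<pi>. path_from d \<pi> u0 v0 \<and> set \<pi> \<subseteq> int_box d (\<lambda>_. 0) Li \<and> passage \<omega> \<pi> < \<infinity>"
    using assms(8) unfolding valid_pattern_def Q by auto
  have "A0 \<in> sets P" using pat by (simp add: pattern_def local_event_def)
  then obtain \<pi>0 n where "path_from d \<pi>0 u0 v0" "set \<pi>0 \<subseteq> int_box d (\<lambda>_. 0) Li"
    "measure P (A0 \<inter> ({\<omega>\<in>space P. passage \<omega> \<pi>0 < of_nat n} \<inter>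
       (if measure L {\<infinity>} = 0 then {\<omega>\<in>space P. \<forall>e\<in>edges_of d (int_box d (\<lambda>_. 0) Li). \<omega> e \<le> of_nat n}
        else space P))) > 0"
    by (rule positive_piece_with_path[where bounded = "measure L {\<infinity>} = 0", OF finite_int_box _ pos paths])
  moreover obtain i s where "box_exit d Li u0 i s (u0(i := exit_coord Li i s))"
    using pat vboundary_box_exit by (metis pattern_def)
  moreover obtain j \<sigma> where "box_exit d Li v0 j \<sigma> (v0(j := exit_coord Li j \<sigma>))"
    using pat vboundary_box_exit by (metis pattern_def)
  ultimately interpret pattern_construction d Li u0 i s "u0(i := exit_coord Li i s)" v0 j \<sigma>
      "v0(j := exit_coord Li j \<sigma>)" N "N + 3" "N + 6" "N + 9" L A0 \<pi>0 n
    using assms(1,6) pat Li_le_N by unfold_locales (auto simp: Li_def pattern_def)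
  show ?thesis using extended_pattern unfolding Q .
qed

end
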